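(* Let $L=\bigoplus_{i=0}^N L_i$ be a Jordan splitting with $N\ge2$, let $L'$ be the associated lattice with decomposition $L'=\bigoplus_{i=0}^{N-1}L'_i$, and let $M\in\{L,L'\}$ with its given decomposition $M=\bigoplus_i M_i$. Let $0\le i\le j\le N$ if $M=L$ and $0\le i\le j\le N-1$ if $M=L'$. Then for all $g\in G_M$ and $x\in M_j$ we have $g(x)^M_i\in\mathfrak{p}_E^{j-i}M_i$.
   Context: $F$ is a non-archimedean local field with residue characteristic $p$, ring of integers $\mathcal{O}_F$, uniformiser $\varpi_F$. Fix $\epsilon\in\{\pm1\}$ and $(E,\sigma)$ one of: $E=F$, $\sigma=\mathrm{id}$; $E$ a quadratic field extension of $F$ with $\sigma$ the nontrivial automorphism; $E=F\oplus F$ with $\sigma(x,y)=(y,x)$; $E$ the quaternion division algebra over $F$ with its standard involution. Assume $p\ne2$ if $E$ is a ramified quadratic extension, or if $E=F$ and $\epsilon=1$. $\mathcal{O}_E$ is the maximal $\mathcal{O}_F$-order; $\varpi_E$ is a uniformiser of $\mathcal{O}_E$ if $E/F$ is ramified or $E$ is quaternion, and $\varpi_E=\varpi_F$ otherwise; $\mathfrak{p}_E=\varpi_E\mathcal{O}_E$. $L$ is a finite-rank $\mathcal{O}_E$-lattice with a $(\sigma,\epsilon)$-Hermitian form $\langle\ ,\ \rangle:L\times L\to\mathcal{O}_E$, nondegenerate on $V=L\otimes_{\mathcal{O}_F}F$; $L^\vee=\{x\in V:\langle x,L\rangle\subseteq\mathcal{O}_E\}$. A Jordan splitting is an orthogonal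 decomposition $L=\bigoplus_{i=0}^N L_i$ with $L_i^\vee=\mathfrak{p}_E^{-i}L_i$. For $N\ge2$, $L'=\bigoplus_{i=0}^{N-1}L'_i$ where $L'_i=L_i$ for $i\ne N-2$ and $L'_{N-2}=L_{N-2}\oplus\mathfrak{p}_E^{-1}L_N$. For $x\in V$ and a decomposition $M=\bigoplus_i M_i$, $x^M_i\in M_i\otimes F$ denotes the components with $x=\sum_i x^M_i$. $G_V$ is the isometry group of $V$ and $G_M\subseteq G_V$ the stabiliser of $M$. *)

theory Defs
  imports Main
begin

text \<open>F is a field with a normalised discrete valuation vF (value at 0 irrelevant, 0 is
treated as having valuation +infinity). O_F and the local-field axioms.\<close>

definition OF :: "('f::field \<Rightarrow> int) \<Rightarrow> 'f set" where
  "OF v = {x. x = 0 \<or> 0 \<le> v x}"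

text \<open>Non-archimedean local field: complete w.r.t. a discrete valuation, finite residue
field; the given element is a uniformiser (valuation 1).\<close>
definition nonarch_local_field :: "('f::field \<Rightarrow> int) \<Rightarrow> 'f \<Rightarrow> bool" where
  "nonarch_local_field v \<pi> \<longleftrightarrow>
     (\<forall>x y. x \<noteq> 0 \<longrightarrow> y \<noteq> 0 \<longrightarrow> v (x * y) = v x + v y) \<and>
     (\<forall>x y. x \<noteq> 0 \<longrightarrow> y \<noteq> 0 \<longrightarrow> x + y \<noteq> 0 \<longrightarrow> min (v x) (v y) \<le> v (x + y)) \<and>
     \<pi> \<noteq> 0 \<and> v \<pi> = 1 \<and>
     (\<forall>s::nat \<Rightarrow> 'f.
        (\<forall>k. \<exists>N. \<forall>m\<ge>N. \<forall>n\<ge>N. s m = s n \<or> k \<le> v (s m - s n)) \<longrightarrow>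
        (\<exists>l. \<forall>k. \<exists>N. \<forall>n\<ge>N. s n = l \<or> k \<le> v (s n - l))) \<and>
     (\<exists>R. finite R \<and> R \<subseteq> OF v \<and> (\<forall>a\<in>OF v. \<exists>r\<in>R. a = r \<or> 1 \<le> v (a - r)))"

text \<open>Residue characteristic different from 2, i.e. 2 is not in the maximal ideal of O_F.\<close>
definition res_char_not_2 :: "('f::field \<Rightarrow> int) \<Rightarrow> bool" where
  "res_char_not_2 v \<longleftrightarrow> (2::'f) \<noteq> 0 \<and> v 2 = 0"

definition F_algebra :: "('f::field \<Rightarrow> 'e::ring_1) \<Rightarrow> bool" where
  "F_algebra \<iota> \<longleftrightarrow> inj \<iota> \<and> \<iota> 1 = 1 \<and> (\<forall>a b. \<iota> (a + b) = \<iota> a + \<iota> b) \<and>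
     (\<forall>a b. \<iota> (a * b) = \<iota> a * \<iota> b) \<and> (\<forall>a x. \<iota> a * x = x * \<iota> a)"

definition F_dim :: "('f::field \<Rightarrow> 'e::ring_1) \<Rightarrow> nat \<Rightarrow> bool" where
  "F_dim \<iota> n \<longleftrightarrow> (\<exists>b::nat \<Rightarrow> 'e. \<forall>x. \<exists>!c::nat \<Rightarrow> 'f.
      (\<forall>k\<ge>n. c k = 0) \<and> x = (\<Sum>k<n. \<iota> (c k) * b k))"

definition ring_involution :: "('e::ring_1 \<Rightarrow> 'e) \<Rightarrow> bool" where
  "ring_involution \<sigma> \<longleftrightarrow> (\<forall>x y. \<sigma> (x + y) = \<sigma> x + \<sigma> y) \<and> (\<forall>x y. \<sigma> (x * y) = \<sigma> y * \<sigma> x) \<and>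
     \<sigma> 1 = 1 \<and> (\<forall>x. \<sigma> (\<sigma> x) = x)"

definition case_F :: "('f::field \<Rightarrow> 'e::ring_1) \<Rightarrow> ('e \<Rightarrow> 'e) \<Rightarrow> bool" where
  "case_F \<iota> \<sigma> \<longleftrightarrow> surj \<iota> \<and> \<sigma> = id"

definition case_quadratic :: "('f::field \<Rightarrow> 'e::ring_1) \<Rightarrow> ('e \<Rightarrow> 'e) \<Rightarrow> bool" where
  "case_quadratic \<iota> \<sigma> \<longleftrightarrow> (0::'e) \<noteq> 1 \<and> (\<forall>x y::'e. x * y = y * x) \<and>
     (\<forall>x::'e. x \<noteq> 0 \<longrightarrow> (\<exists>y. x * y = 1)) \<and> F_dim \<iota> 2 \<and>
     ring_involution \<sigma> \<and> (\<forall>a. \<sigma> (\<iota> a) = \<iota> a) \<and> \<sigma> \<noteq> id"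

definition case_split :: "('f::field \<Rightarrow> 'e::ring_1) \<Rightarrow> ('e \<Rightarrow> 'e) \<Rightarrow> bool" where
  "case_split \<iota> \<sigma> \<longleftrightarrow> (\<exists>\<phi>::'e \<Rightarrow> 'f \<times> 'f. bij \<phi> \<and>
     (\<forall>x y. \<phi> (x + y) = (fst (\<phi> x) + fst (\<phi> y), snd (\<phi> x) + snd (\<phi> y))) \<and>
     (\<forall>x y. \<phi> (x * y) = (fst (\<phi> x) * fst (\<phi> y), snd (\<phi> x) * snd (\<phi> y))) \<and>
     (\<forall>a. \<phi> (\<iota> a) = (a, a)) \<and>
     (\<forall>x. \<phi> (\<sigma> x) = (snd (\<phi> x), fst (\<phi> x))))"

text \<open>Case 4: E the quaternion division algebra over F (central division algebra of
dimension 4), sigma its standard involution.\<close>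
definition case_quaternion :: "('f::field \<Rightarrow> 'e::ring_1) \<Rightarrow> ('e \<Rightarrow> 'e) \<Rightarrow> bool" where
  "case_quaternion \<iota> \<sigma> \<longleftrightarrow> (0::'e) \<noteq> 1 \<and>
     (\<forall>x::'e. x \<noteq> 0 \<longrightarrow> (\<exists>y. x * y = 1 \<and> y * x = 1)) \<and>
     {z::'e. \<forall>x. z * x = x * z} = range \<iota> \<and> F_dim \<iota> 4 \<and>
     ring_involution \<sigma> \<and> (\<forall>a. \<sigma> (\<iota> a) = \<iota> a) \<and>
     (\<forall>x. x + \<sigma> x \<in> range \<iota> \<and> x * \<sigma> x \<in> range \<iota>)"

definition herm_pair :: "('f::field \<Rightarrow> 'e::ring_1) \<Rightarrow> ('e \<Rightarrow> 'e) \<Rightarrow> bool" where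
  "herm_pair \<iota> \<sigma> \<longleftrightarrow> case_F \<iota> \<sigma> \<or> case_quadratic \<iota> \<sigma> \<or> case_split \<iota> \<sigma> \<or> case_quaternion \<iota> \<sigma>"

definition OF_order :: "('f::field \<Rightarrow> 'e::ring_1) \<Rightarrow> ('f \<Rightarrow> int) \<Rightarrow> 'e set \<Rightarrow> bool" where
  "OF_order \<iota> v Ord \<longleftrightarrow> 1 \<in> Ord \<and> (\<forall>x\<in>Ord. \<forall>y\<in>Ord. x + y \<in> Ord \<and> - x \<in> Ord \<and> x * y \<in> Ord) \<and>
     \<iota> ` OF v \<subseteq> Ord \<and>
     (\<exists>gs::'e list. Ord = {\<Sum>k<length gs. \<iota> (a k) * gs ! k | a. \<forall>k. a k \<in> OF v}) \<and>
     (\<forall>x. \<exists>a. a \<noteq> 0 \<and> \<iota> a * x \<in> Ord)"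

definition maximal_order :: "('f::field \<Rightarrow> 'e::ring_1) \<Rightarrow> ('f \<Rightarrow> int) \<Rightarrow> 'e set \<Rightarrow> bool" where
  "maximal_order \<iota> v Ord \<longleftrightarrow> OF_order \<iota> v Ord \<and> (\<forall>Ord'. OF_order \<iota> v Ord' \<and> Ord \<subseteq> Ord' \<longrightarrow> Ord' = Ord)"

definition nonunits :: "'e::ring_1 set \<Rightarrow> 'e set" where
  "nonunits Ord = {x\<in>Ord. \<not> (\<exists>y\<in>Ord. x * y = 1 \<and> y * x = 1)}"

definition E_uniformiser :: "'e::ring_1 set \<Rightarrow> 'e \<Rightarrow> bool" where
  "E_uniformiser Ord \<pi> \<longleftrightarrow> \<pi> \<in> Ord \<and> {\<pi> * y | y. y \<in> Ord} = nonunits Ord"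

definition ramified :: "('f::field \<Rightarrow> 'e::ring_1) \<Rightarrow> ('e \<Rightarrow> 'e) \<Rightarrow> 'e set \<Rightarrow> 'f \<Rightarrow> bool" where
  "ramified \<iota> \<sigma> Ord \<pi>F \<longleftrightarrow> case_quadratic \<iota> \<sigma> \<and> {\<iota> \<pi>F * y | y. y \<in> Ord} \<noteq> nonunits Ord"

definition left_module :: "('e::ring_1 \<Rightarrow> 'v::ab_group_add \<Rightarrow> 'v) \<Rightarrow> bool" where
  "left_module sm \<longleftrightarrow> (\<forall>a x y. sm a (x + y) = sm a x + sm a y) \<and>
     (\<forall>a b x. sm (a + b) x = sm a x + sm b x) \<and> (\<forall>a b x. sm (a * b) x = sm a (sm b x)) \<and>
     (\<forall>x. sm 1 x = x)"

definition herm_form :: "('e::ring_1 \<Rightarrow> 'v::ab_group_add \<Rightarrow> 'v) \<Rightarrow> ('e \<Rightarrow> 'e) \<Rightarrow> int \<Rightarrow> ('v \<Rightarrow> 'v \<Rightarrow> 'e) \<Rightarrow> bool" where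
  "herm_form sm \<sigma> \<epsilon> B \<longleftrightarrow> (\<forall>x y z. B (x + y) z = B x z + B y z) \<and>
     (\<forall>a x y. B (sm a x) y = a * B x y) \<and> (\<forall>x y. B y x = of_int \<epsilon> * \<sigma> (B x y))"

definition nondegenerate :: "('v::zero \<Rightarrow> 'v \<Rightarrow> 'e::zero) \<Rightarrow> bool" where
  "nondegenerate B \<longleftrightarrow> (\<forall>x. (\<forall>y. B x y = 0) \<longrightarrow> x = 0)"

definition fg_submodule :: "('e::ring_1 \<Rightarrow> 'v::ab_group_add \<Rightarrow> 'v) \<Rightarrow> 'e set \<Rightarrow> 'v set \<Rightarrow> bool" where
  "fg_submodule sm Ord M \<longleftrightarrow> 0 \<in> M \<and> (\<forall>x\<in>M. \<forall>y\<in>M. x + y \<in> M) \<and> (\<forall>a\<in>Ord. \<forall>x\<in>M. sm a x \<in> M) \<and>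
     (\<exists>gs::'v list. M = {\<Sum>k<length gs. sm (a k) (gs ! k) | a. \<forall>k. a k \<in> Ord})"

text \<open>M tensor F, realised inside V.\<close>
definition Fspan :: "('e::ring_1 \<Rightarrow> 'v::ab_group_add \<Rightarrow> 'v) \<Rightarrow> ('f::field \<Rightarrow> 'e) \<Rightarrow> 'f \<Rightarrow> 'v set \<Rightarrow> 'v set" where
  "Fspan sm \<iota> \<pi>F M = {v. \<exists>n::nat. sm (\<iota> (\<pi>F ^ n)) v \<in> M}"

text \<open>L is a finite rank O_E-lattice in V (= the whole type) with L tensor F = V and the
form O_E-valued on L.\<close>
definition herm_lattice where
  "herm_lattice sm \<iota> \<pi>F Ord B L \<longleftrightarrow> fg_submodule sm Ord L \<and> Fspan sm \<iota> \<pi>F L = UNIV \<and>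
     (\<forall>x\<in>L. \<forall>y\<in>L. B x y \<in> Ord)"

definition dual_in :: "('v \<Rightarrow> 'v \<Rightarrow> 'e) \<Rightarrow> 'e set \<Rightarrow> 'v set \<Rightarrow> 'v set \<Rightarrow> 'v set" where
  "dual_in B Ord W M = {x\<in>W. \<forall>y\<in>M. B x y \<in> Ord}"

text \<open>p_E^k M = varpi_E^k M for k an integer (for k < 0 as a preimage).\<close>
definition pE_pow :: "('e::ring_1 \<Rightarrow> 'v::ab_group_add \<Rightarrow> 'v) \<Rightarrow> 'e \<Rightarrow> int \<Rightarrow> 'v set \<Rightarrow> 'v set" where
  "pE_pow sm \<pi>E k M = (if 0 \<le> k then {sm (\<pi>E ^ nat k) m | m. m \<in> M}
                        else {v. sm (\<pi>E ^ nat (- k)) v \<in> M})"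

definition direct_decomp :: "'v::ab_group_add set \<Rightarrow> (nat \<Rightarrow> 'v set) \<Rightarrow> nat \<Rightarrow> bool" where
  "direct_decomp M Ms n \<longleftrightarrow> (\<forall>i\<le>n. Ms i \<subseteq> M) \<and>
     (\<forall>x\<in>M. \<exists>!c::nat \<Rightarrow> 'v. (\<forall>i\<le>n. c i \<in> Ms i) \<and> (\<forall>i>n. c i = 0) \<and> x = (\<Sum>i\<le>n. c i))"

definition orthogonal_family :: "('v \<Rightarrow> 'v \<Rightarrow> 'e::zero) \<Rightarrow> (nat \<Rightarrow> 'v set) \<Rightarrow> nat \<Rightarrow> bool" where
  "orthogonal_family B Ms n \<longleftrightarrow>
     (\<forall>i\<le>n. \<forall>j\<le>n. i \<noteq> j \<longrightarrow> (\<forall>x\<in>Ms i. \<forall>y\<in>Ms j. B x y = 0))"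

definition jordan_splitting where
  "jordan_splitting sm \<iota> \<pi>F Ord \<pi>E B L Ls N \<longleftrightarrow>
     (\<forall>i\<le>N. fg_submodule sm Ord (Ls i)) \<and> direct_decomp L Ls N \<and> orthogonal_family B Ls N \<and>
     (\<forall>i\<le>N. dual_in B Ord (Fspan sm \<iota> \<pi>F (Ls i)) (Ls i) = pE_pow sm \<pi>E (- int i) (Ls i))"

definition Lprime_parts :: "('e::ring_1 \<Rightarrow> 'v::ab_group_add \<Rightarrow> 'v) \<Rightarrow> 'e \<Rightarrow> (nat \<Rightarrow> 'v set) \<Rightarrow> nat \<Rightarrow> nat \<Rightarrow> 'v set" where
  "Lprime_parts sm \<pi>E Ls N i = (if i = N - 2
      then {a + b | a b. a \<in> Ls (N - 2) \<and> b \<in> pE_pow sm \<pi>E (-1) (Ls N)} else Ls i)"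

definition Lprime :: "('e::ring_1 \<Rightarrow> 'v::ab_group_add \<Rightarrow> 'v) \<Rightarrow> 'e \<Rightarrow> (nat \<Rightarrow> 'v set) \<Rightarrow> nat \<Rightarrow> 'v set" where
  "Lprime sm \<pi>E Ls N = {\<Sum>i<N. c i | c. \<forall>i<N. c i \<in> Lprime_parts sm \<pi>E Ls N i}"

text \<open>x^M_i: the i-th component of x in V = (+)_i (M_i tensor F).\<close>
definition component :: "('e::ring_1 \<Rightarrow> 'v::ab_group_add \<Rightarrow> 'v) \<Rightarrow> ('f::field \<Rightarrow> 'e) \<Rightarrow> 'f \<Rightarrow> (nat \<Rightarrow> 'v set) \<Rightarrow> nat \<Rightarrow> 'v \<Rightarrow> nat \<Rightarrow> 'v" where
  "component sm \<iota> \<pi>F Ms n x i = (THE c::nat \<Rightarrow> 'v. (\<forall>k\<le>n. c k \<in> Fspan sm \<iota> \<pi>F (Ms k)) \<and>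
      (\<forall>k>n. c k = 0) \<and> x = (\<Sum>k\<le>n. c k)) i"

definition isometry :: "('e::ring_1 \<Rightarrow> 'v::ab_group_add \<Rightarrow> 'v) \<Rightarrow> ('v \<Rightarrow> 'v \<Rightarrow> 'e) \<Rightarrow> ('v \<Rightarrow> 'v) \<Rightarrow> bool" where
  "isometry sm B g \<longleftrightarrow> bij g \<and> (\<forall>x y. g (x + y) = g x + g y) \<and> (\<forall>a x. g (sm a x) = sm a (g x)) \<and>
     (\<forall>x y. B (g x) (g y) = B x y)"

definition stabiliser :: "('e::ring_1 \<Rightarrow> 'v::ab_group_add \<Rightarrow> 'v) \<Rightarrow> ('v \<Rightarrow> 'v \<Rightarrow> 'e) \<Rightarrow> 'v set \<Rightarrow> ('v \<Rightarrow> 'v) set" where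
  "stabiliser sm B M = {g. isometry sm B g \<and> g ` M = M}"

end

theory Submission
  imports Defs
begin

text \<open>Write \<open>g x = \<Sum> c_k\<close> with \<open>c_k \<in> M_k\<close>. Since the parts are mutually orthogonal and
  the form is nondegenerate, this is the decomposition defining the components, so the
  \<open>i\<close>-th component of \<open>g x\<close> is \<open>c_i\<close>. For \<open>y \<in> M_i\<close> we have
  \<open>\<langle>c_i, y\<rangle> = \<langle>g x, y\<rangle> = \<langle>x, g\<^sup>-\<^sup>1 y\<rangle>\<close>, and pairing \<open>x \<in> M_j\<close> with \<open>M\<close> lands in
  \<open>p_E^j O_E\<close>. Hence \<open>\<pi>E^-j c_i\<close> lies in the dual of \<open>M_i\<close>, which is \<open>p_E^-i M_i\<close>, and
  so \<open>c_i \<in> p_E^(j-i) M_i\<close>.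

  These duality properties hold for the Jordan splitting of \<open>L\<close> by definition. For \<open>L'\<close>
  the only new part is \<open>L'_(N-2) = L_(N-2) \<oplus> p_E^-1 L_N\<close>, and there one needs the twist
  \<open>\<pi>E O_E = O_E \<sigma>(\<pi>E)\<close>. This is trivial when \<open>\<pi>E = \<pi>F\<close>; when \<open>\<pi>E\<close> is a uniformiser of a
  division algebra, both sides are the maximal ideal, which \<open>\<sigma>\<close> preserves because \<open>\<sigma>\<close>
  preserves \<open>O_E\<close>: the norm \<open>y \<sigma>(y)\<close> of an integral \<open>y\<close> is integral, as its powers have
  bounded valuation, and then so is the trace \<open>y + \<sigma>(y)\<close>.\<close>

text \<open>\<open>0\<close> counts as having valuation \<open>+\<infinity>\<close>; the value \<open>v 0\<close> is junk.\<close>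

definition val_ge :: "('f::field \<Rightarrow> int) \<Rightarrow> int \<Rightarrow> 'f \<Rightarrow> bool" where
  "val_ge v C a \<longleftrightarrow> a = 0 \<or> C \<le> v a"

lemma val_ge_zero [simp]: "val_ge v C 0"
  unfolding val_ge_def by simp

lemma OF_iff_val_ge: "a \<in> OF v \<longleftrightarrow> val_ge v 0 a"
  unfolding OF_def val_ge_def by auto

lemma val_ge_finite_bound:
  assumes "finite S"
  shows "\<exists>C. \<forall>a\<in>S. val_ge v C a"
proof -
  have "\<forall>a\<in>S. val_ge v (Min (insert 0 (v ` S))) a"
    using assms by (auto simp: val_ge_def)
  then show ?thesis by blast
qed

locale valued_field =
  fixes v :: "'f::field \<Rightarrow> int" and \<pi> :: 'f
  assumes local_field: "nonarch_local_field v \<pi>"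
begin

lemma val_mult: "x \<noteq> 0 \<Longrightarrow> y \<noteq> 0 \<Longrightarrow> v (x * y) = v x + v y"
  using local_field unfolding nonarch_local_field_def by blast

lemma val_add: "x \<noteq> 0 \<Longrightarrow> y \<noteq> 0 \<Longrightarrow> x + y \<noteq> 0 \<Longrightarrow> min (v x) (v y) \<le> v (x + y)"
  using local_field unfolding nonarch_local_field_def by blast

lemma uniformiser_nonzero: "\<pi> \<noteq> 0" and val_uniformiser: "v \<pi> = 1"
  using local_field unfolding nonarch_local_field_def by blast+

lemma val_one: "v 1 = 0"
  using val_mult[of 1 1] by simp

lemma val_power: "x \<noteq> 0 \<Longrightarrow> v (x ^ k) = int k * v x"
  by (induction k) (simp_all add: val_one val_mult algebra_simps)

lemma val_inverse: "x \<noteq> 0 \<Longrightarrow> v (inverse x) = - v x"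
  using val_mult[of x "inverse x"] val_one by simp

lemma val_uminus: "v (- x) = v x"
proof (cases "x = 0")
  case False
  have "v (-1) = 0" using val_mult[of "-1" "-1"] val_one by simp
  then show ?thesis using val_mult[of "-1" x] False by simp
qed simp

lemma val_ge_add: "val_ge v C a \<Longrightarrow> val_ge v C b \<Longrightarrow> val_ge v C (a + b)"
  using val_add[of a b] unfolding val_ge_def by fastforce

lemma val_ge_mult: "val_ge v C a \<Longrightarrow> val_ge v D b \<Longrightarrow> val_ge v (C + D) (a * b)"
  using val_mult[of a b] unfolding val_ge_def by (cases "a = 0 \<or> b = 0") auto

lemma val_ge_uminus: "val_ge v C a \<Longrightarrow> val_ge v C (- a)"
  using val_uminus[of a] unfolding val_ge_def by auto

lemma val_ge_sum: "(\<And>k. k \<in> A \<Longrightarrow> val_ge v C (f k)) \<Longrightarrow> val_ge v C (sum f A)"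
  by (induction A rule: infinite_finite_induct) (simp_all add: val_ge_add)

lemma OF_one: "1 \<in> OF v"
  and OF_uniformiser: "\<pi> \<in> OF v"
  and OF_diff: "a \<in> OF v \<Longrightarrow> b \<in> OF v \<Longrightarrow> a - b \<in> OF v"
  using val_ge_add[of 0 a b] val_ge_add[of 0 a "- b"] val_ge_uminus[of 0 b] val_one val_uniformiser
  unfolding OF_iff_val_ge by (auto simp: val_ge_def)

lemma OF_if_powers_bounded:
  assumes bounded: "\<And>k. val_ge v C (a ^ k * c)" and "c \<noteq> 0"
  shows "a \<in> OF v"
proof (rule ccontr)
  assume "a \<notin> OF v"
  then have a: "a \<noteq> 0" "v a \<le> -1" unfolding OF_def by auto
  define k where "k = nat (\<bar>C - v c\<bar> + 1)"
  have "C \<le> v (a ^ k * c)"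
    using bounded[of k] a(1) \<open>c \<noteq> 0\<close> unfolding val_ge_def by simp
  also have "\<dots> = int k * v a + v c"
    using a(1) \<open>c \<noteq> 0\<close> by (simp add: val_mult val_power)
  also have "\<dots> \<le> - int k + v c"
    using mult_left_mono[OF a(2), of "int k"] by simp
  finally show False unfolding k_def by linarith
qed

end

locale F_alg =
  fixes \<iota> :: "'f::field \<Rightarrow> 'e::ring_1"
  assumes F_algebra: "F_algebra \<iota>"
begin

lemma embed_add: "\<iota> (a + b) = \<iota> a + \<iota> b"
  and embed_mult: "\<iota> (a * b) = \<iota> a * \<iota> b"
  and embed_one: "\<iota> 1 = 1"
  and embed_central: "\<iota> a * x = x * \<iota> a"
  and inj_embed: "inj \<iota>"
  using F_algebra unfolding F_algebra_def by blast+

lemma embed_zero: "\<iota> 0 = 0"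
  using embed_add[of 0 0] by simp

lemma embed_eq_0_iff: "\<iota> a = 0 \<longleftrightarrow> a = 0"
  using inj_embed embed_zero by (metis injD)

lemma embed_diff: "\<iota> (a - b) = \<iota> a - \<iota> b"
  using embed_add[of "a - b" b] by (simp add: eq_diff_eq)

lemma embed_power: "\<iota> (a ^ k) = \<iota> a ^ k"
  by (induction k) (simp_all add: embed_one embed_mult)

lemma embed_inverse: "a \<noteq> 0 \<Longrightarrow> \<iota> a * \<iota> (inverse a) = 1 \<and> \<iota> (inverse a) * \<iota> a = 1"
  using embed_mult[of a "inverse a"] embed_mult[of "inverse a" a] embed_one by simp

end

locale involution =
  fixes \<sigma> :: "'e::ring_1 \<Rightarrow> 'e"
  assumes ring_involution: "ring_involution \<sigma>"
begin

lemma invol_add: "\<sigma> (x + y) = \<sigma> x + \<sigma> y"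
  and invol_mult: "\<sigma> (x * y) = \<sigma> y * \<sigma> x"
  and invol_one: "\<sigma> 1 = 1"
  and invol_invol: "\<sigma> (\<sigma> x) = x"
  using ring_involution unfolding ring_involution_def by blast+

lemma invol_zero: "\<sigma> 0 = 0"
  using invol_add[of 0 0] by simp

lemma invol_sum: "\<sigma> (sum f A) = (\<Sum>x\<in>A. \<sigma> (f x))"
  by (induction A rule: infinite_finite_induct) (simp_all add: invol_zero invol_add)

lemma invol_power: "\<sigma> (x ^ k) = \<sigma> x ^ k"
  by (induction k) (simp_all add: invol_one invol_mult power_commutes)

lemma invol_unit: "x * y = 1 \<Longrightarrow> \<sigma> y * \<sigma> x = 1"
  using invol_mult invol_one by metis

lemma invol_image_nonunits:
  assumes "\<sigma> ` R = R"
  shows "\<sigma> ` nonunits R = nonunits R"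
proof -
  have *: "\<sigma> x \<in> nonunits R" if "x \<in> nonunits R" for x
  proof -
    have "x \<in> R" and "\<sigma> x \<in> R" using that assms unfolding nonunits_def by auto
    moreover have "\<not> (\<exists>y\<in>R. \<sigma> x * y = 1 \<and> y * \<sigma> x = 1)"
    proof
      assume "\<exists>y\<in>R. \<sigma> x * y = 1 \<and> y * \<sigma> x = 1"
      then obtain y where "y \<in> R" "\<sigma> x * y = 1" "y * \<sigma> x = 1" by blast
      then have "\<sigma> y \<in> R" "x * \<sigma> y = 1" "\<sigma> y * x = 1"
        using assms invol_unit[of "\<sigma> x" y] invol_unit[of y "\<sigma> x"] by (auto simp: invol_invol)
      then show False using that unfolding nonunits_def by blast
    qed
    ultimately show ?thesis unfolding nonunits_def by blast
  qed
  have "x \<in> \<sigma> ` nonunits R" if "x \<in> nonunits R" for x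
    using *[OF that] invol_invol[of x] by (metis imageI)
  then show ?thesis using * by blast
qed

end

locale order_in_algebra = valued_field v \<pi>F + F_alg \<iota>
  for v :: "'f::field \<Rightarrow> int" and \<pi>F :: 'f and \<iota> :: "'f \<Rightarrow> 'e::ring_1" +
  fixes OE :: "'e set"
  assumes order: "OF_order \<iota> v OE"
begin

lemma OE_one: "1 \<in> OE"
  and OE_add: "x \<in> OE \<Longrightarrow> y \<in> OE \<Longrightarrow> x + y \<in> OE"
  and OE_uminus: "x \<in> OE \<Longrightarrow> - x \<in> OE"
  and OE_mult: "x \<in> OE \<Longrightarrow> y \<in> OE \<Longrightarrow> x * y \<in> OE"
  and OE_embed: "a \<in> OF v \<Longrightarrow> \<iota> a \<in> OE"
  and OE_generated: "\<exists>gs. OE = {\<Sum>k<length gs. \<iota> (a k) * gs ! k | a. \<forall>k. a k \<in> OF v}"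
  and OE_spans: "\<exists>a. a \<noteq> 0 \<and> \<iota> a * x \<in> OE"
  using order unfolding OF_order_def by blast+

lemma OE_diff: "x \<in> OE \<Longrightarrow> y \<in> OE \<Longrightarrow> x - y \<in> OE"
  using OE_add[of x "- y"] OE_uminus[of y] by simp

lemma OE_power: "x \<in> OE \<Longrightarrow> x ^ k \<in> OE"
  by (induction k) (simp_all add: OE_one OE_mult)

lemma OE_denominator: "\<exists>m. \<iota> (\<pi>F ^ m) * e \<in> OE"
proof -
  obtain a where a: "a \<noteq> 0" "\<iota> a * e \<in> OE" using OE_spans by blast
  define m where "m = nat (v a)"
  define c where "c = \<pi>F ^ m * inverse a"
  have "v c = int m - v a"
    using a(1) uniformiser_nonzero val_uniformiser unfolding c_def by (simp add: val_mult val_power val_inverse)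
  then have "c \<in> OF v" unfolding OF_def m_def by simp
  then have "\<iota> c * (\<iota> a * e) \<in> OE" using OE_mult OE_embed a(2) by blast
  moreover have "\<iota> c * (\<iota> a * e) = \<iota> (\<pi>F ^ m) * e"
    using a(1) by (simp add: mult.assoc[symmetric] embed_mult[symmetric] c_def) (simp add: mult.assoc)
  ultimately show ?thesis by auto
qed

end

locale coords = F_alg \<iota> for \<iota> :: "'f::field \<Rightarrow> 'e::ring_1" +
  fixes d :: nat and b :: "nat \<Rightarrow> 'e" and crd :: "'e \<Rightarrow> nat \<Rightarrow> 'f"
  assumes crd_repr: "x = (\<Sum>k<d. \<iota> (crd x k) * b k)"
    and crd_high: "d \<le> k \<Longrightarrow> crd x k = 0"
    and crd_add: "crd (x + y) k = crd x k + crd y k"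
    and crd_smult: "crd (\<iota> a * x) k = a * crd x k"
begin

lemma crd_zero: "crd 0 k = 0"
  using crd_smult[of 0 0 k] embed_zero by simp

lemma crd_sum: "crd (sum f A) k = (\<Sum>x\<in>A. crd (f x) k)"
  by (induction A rule: infinite_finite_induct) (simp_all add: crd_zero crd_add)

lemma crd_embed: "crd (\<iota> a) k = a * crd 1 k"
  using crd_smult[of a 1 k] by simp

lemma crd_ext: "(\<And>k. crd x k = crd y k) \<Longrightarrow> x = y"
  using crd_repr[of x] crd_repr[of y] by simp

lemma crd_one_nonzero: "(0::'e) \<noteq> 1 \<Longrightarrow> \<exists>l. crd 1 l \<noteq> 0"
  using crd_ext[of 1 0] crd_zero by auto

lemma dim2_det_nonzero:
  assumes d: "d = 2" and nontrivial: "(0::'e) \<noteq> 1" and z: "z \<notin> range \<iota>"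
  shows "crd 1 0 * crd z 1 - crd 1 1 * crd z 0 \<noteq> 0"
proof
  define a0 a1 c0 c1 where "a0 = crd 1 0" "a1 = crd 1 1" "c0 = crd z 0" "c1 = crd z 1"
  assume "crd 1 0 * crd z 1 - crd 1 1 * crd z 0 = 0"
  then have det0: "a0 * c1 = a1 * c0" unfolding a0_a1_c0_c1_def by simp
  have high: "crd y k = 0" if "k \<noteq> 0" "k \<noteq> 1" for y k using crd_high[of k y] that d by simp
  have scalar: "z = \<iota> r" if "\<And>k. k \<le> 1 \<Longrightarrow> crd z k = r * crd 1 k" for r
  proof (rule crd_ext)
    show "crd z k = crd (\<iota> r) k" for k
      using that[of k] high[of k] by (cases "k \<le> 1") (auto simp: crd_embed)
  qed
  consider "a0 \<noteq> 0" | "a0 = 0" "a1 \<noteq> 0"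
    using crd_one_nonzero[OF nontrivial] high unfolding a0_a1_c0_c1_def by (metis One_nat_def)
  then show False
  proof cases
    case 1
    have "z = \<iota> (c0 / a0)"
      using 1 det0 by (intro scalar) (auto simp: a0_a1_c0_c1_def le_Suc_eq field_simps)
    then show False using z by blast
  next
    case 2
    have "z = \<iota> (c1 / a1)"
      using 2 det0 by (intro scalar) (auto simp: a0_a1_c0_c1_def le_Suc_eq field_simps)
    then show False using z by blast
  qed
qed

text \<open>Cramer's rule for the pair \<open>1, z\<close>.\<close>

lemma dim2_span:
  assumes d: "d = 2" and nontrivial: "(0::'e) \<noteq> 1" and z: "z \<notin> range \<iota>"
  shows "\<exists>p q. x = \<iota> p + \<iota> q * z"
proof -
  define a0 a1 c0 c1 where "a0 = crd 1 0" "a1 = crd 1 1" "c0 = crd z 0" "c1 = crd z 1"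
  define D where "D = a0 * c1 - a1 * c0"
  have det: "D \<noteq> 0"
    using dim2_det_nonzero[OF assms] unfolding D_def a0_a1_c0_c1_def .
  have high: "crd y k = 0" if "k \<noteq> 0" "k \<noteq> 1" for y k using crd_high[of k y] that d by simp
  define p q where "p = (crd x 0 * c1 - crd x 1 * c0) / D" "q = (a0 * crd x 1 - a1 * crd x 0) / D"
  have pD: "p * D = crd x 0 * c1 - crd x 1 * c0" and qD: "q * D = a0 * crd x 1 - a1 * crd x 0"
    using det unfolding p_q_def by simp_all
  have "(p * a0 + q * c0) * D = a0 * (p * D) + c0 * (q * D)"
    and "(p * a1 + q * c1) * D = a1 * (p * D) + c1 * (q * D)"
    by (simp_all add: algebra_simps)
  then have "(p * a0 + q * c0) * D = crd x 0 * D" "(p * a1 + q * c1) * D = crd x 1 * D"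
    unfolding pD qD by (simp_all add: D_def algebra_simps)
  then have coeffs: "p * a0 + q * c0 = crd x 0" "p * a1 + q * c1 = crd x 1"
    using det by simp_all
  have "x = \<iota> p + \<iota> q * z"
  proof (intro crd_ext)
    fix k
    show "crd x k = crd (\<iota> p + \<iota> q * z) k"
      using coeffs high[of k x] high[of k 1] high[of k z]
      by (cases "k = 0 \<or> k = 1") (auto simp: crd_add crd_smult crd_embed a0_a1_c0_c1_def)
  qed
  then show ?thesis by blast
qed

end

lemma F_dim_coords:
  assumes "F_algebra \<iota>" and "F_dim \<iota> d"
  shows "\<exists>b crd. coords \<iota> d b crd"
proof -
  interpret F_alg \<iota> by (rule F_alg.intro) fact
  obtain b where b: "\<And>x. \<exists>!c. (\<forall>k\<ge>d. c k = 0) \<and> x = (\<Sum>k<d. \<iota> (c k) * b k)"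
    using assms(2) unfolding F_dim_def by blast
  define crd where "crd x = (THE c. (\<forall>k\<ge>d. c k = 0) \<and> x = (\<Sum>k<d. \<iota> (c k) * b k))" for x
  have crd: "(\<forall>k\<ge>d. crd x k = 0) \<and> x = (\<Sum>k<d. \<iota> (crd x k) * b k)" for x
    unfolding crd_def by (rule theI'[OF b])
  have crd_eq: "crd x = c" if "\<forall>k\<ge>d. c k = 0" "x = (\<Sum>k<d. \<iota> (c k) * b k)" for x c
    using b[of x] crd[of x] that by blast
  have "crd (x + y) = (\<lambda>k. crd x k + crd y k)" for x y
  proof (rule crd_eq)
    have "x + y = (\<Sum>k<d. \<iota> (crd x k) * b k) + (\<Sum>k<d. \<iota> (crd y k) * b k)" using crd by metis
    then show "x + y = (\<Sum>k<d. \<iota> (crd x k + crd y k) * b k)"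
      by (simp add: sum.distrib embed_add distrib_right)
  qed (use crd in simp)
  moreover have "crd (\<iota> a * x) = (\<lambda>k. a * crd x k)" for a x
  proof (rule crd_eq)
    have "\<iota> a * x = \<iota> a * (\<Sum>k<d. \<iota> (crd x k) * b k)" using crd by metis
    then show "\<iota> a * x = (\<Sum>k<d. \<iota> (a * crd x k) * b k)"
      by (simp add: sum_distrib_left embed_mult mult.assoc)
  qed (use crd in simp)
  ultimately have "coords \<iota> d b crd"
    using crd by unfold_locales auto
  then show ?thesis by blast
qed

locale order_coords = order_in_algebra v \<pi>F \<iota> OE + coords \<iota> d b crd
  for v :: "'f::field \<Rightarrow> int" and \<pi>F :: 'f and \<iota> :: "'f \<Rightarrow> 'e::ring_1" and OE d b crd
begin

lemma OE_crd_bounded: "\<exists>C. \<forall>y\<in>OE. \<forall>k. val_ge v C (crd y k)"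
proof -
  obtain gs where gs: "OE = {\<Sum>k<length gs. \<iota> (a k) * gs ! k | a. \<forall>k. a k \<in> OF v}"
    using OE_generated by blast
  let ?S = "(\<lambda>(m, k). crd (gs ! m) k) ` ({..<length gs} \<times> {..<d})"
  obtain C where C: "\<forall>c\<in>?S. val_ge v C c"
    using val_ge_finite_bound[of ?S v] by blast
  have gen: "val_ge v C (crd (gs ! m) k)" if "m < length gs" for m k
  proof (cases "k < d")
    case True
    then have "crd (gs ! m) k \<in> ?S" using that by force
    then show ?thesis using C by blast
  qed (simp add: crd_high)
  have "val_ge v C (crd y k)" if "y \<in> OE" for y k
  proof -
    obtain a where a: "\<forall>k. a k \<in> OF v" "y = (\<Sum>m<length gs. \<iota> (a m) * gs ! m)"
      using \<open>y \<in> OE\<close> gs by blast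
    have "val_ge v (0 + C) (a m * crd (gs ! m) k)" if "m < length gs" for m
      using val_ge_mult[of 0 "a m" C] a(1) gen[OF that] by (simp add: OF_iff_val_ge)
    then show ?thesis
      using a(2) by (simp add: crd_sum crd_smult) (rule val_ge_sum, simp)
  qed
  then show ?thesis by blast
qed

text \<open>If the uniformiser were \<open>0\<close>, every nonzero element of \<open>O_E\<close> would be a unit,
  so all powers of \<open>\<iota> (inverse \<pi>F)\<close> would lie in the bounded set \<open>O_E\<close>.\<close>

lemma E_uniformiser_nonzero:
  assumes "(0::'e) \<noteq> 1" and "E_uniformiser OE \<pi>"
  shows "\<pi> \<noteq> 0"
proof
  assume "\<pi> = 0"
  then have "nonunits OE = {0}"
    using assms(2) OE_one unfolding E_uniformiser_def by auto
  moreover have "\<iota> \<pi>F \<in> OE" "\<iota> \<pi>F \<noteq> 0"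
    using OE_embed OF_uniformiser uniformiser_nonzero embed_eq_0_iff by auto
  ultimately obtain u where u: "u \<in> OE" "\<iota> \<pi>F * u = 1"
    unfolding nonunits_def by blast
  have "u = \<iota> (inverse \<pi>F)"
    using u(2) embed_inverse[OF uniformiser_nonzero] by (metis mult.assoc mult_1_left)
  then have inv_OE: "\<iota> (inverse \<pi>F ^ k) \<in> OE" for k
    using OE_power[OF u(1)] by (simp add: embed_power)
  obtain C where C: "\<And>y k. y \<in> OE \<Longrightarrow> val_ge v C (crd y k)" using OE_crd_bounded by blast
  obtain l where l: "crd 1 l \<noteq> 0" using crd_one_nonzero assms(1) by blast
  have "val_ge v C (inverse \<pi>F ^ k * crd 1 l)" for k
    using C[OF inv_OE] by (simp add: crd_embed)
  then have "inverse \<pi>F \<in> OF v" using OF_if_powers_bounded l by blast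
  then show False
    using val_inverse[OF uniformiser_nonzero] val_uniformiser uniformiser_nonzero
    unfolding OF_def by simp
qed

end

lemma power_mult_distrib_central:
  fixes y w :: "'a::ring_1"
  assumes central: "\<And>x. y * w * x = x * (y * w)"
  shows "y ^ k * w ^ k = (y * w) ^ k"
proof (induction k)
  case (Suc k)
  have "y ^ Suc k * w ^ Suc k = y * (y ^ k * w ^ k) * w"
    by (simp add: power_commutes mult.assoc)
  also have "\<dots> = y * (y * w) ^ k * w" using Suc by simp
  also have "\<dots> = (y * w) ^ k * (y * w)"
    using power_commuting_commutes[of "y * w" y] central[of y] by (metis mult.assoc)
  finally show ?case by (simp add: power_commutes)
qed simp

definition alg_norm :: "('f \<Rightarrow> 'e::ring_1) \<Rightarrow> ('e \<Rightarrow> 'e) \<Rightarrow> 'e \<Rightarrow> 'f" where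
  "alg_norm \<iota> \<sigma> y = inv \<iota> (y * \<sigma> y)"

locale normed_order = order_coords v \<pi>F \<iota> OE d b crd + involution \<sigma>
  for v :: "'f::field \<Rightarrow> int" and \<pi>F :: 'f and \<iota> :: "'f \<Rightarrow> 'e::ring_1" and OE d b crd \<sigma> +
  assumes invol_embed: "\<sigma> (\<iota> a) = \<iota> a"
    and norm_in_F: "y * \<sigma> y \<in> range \<iota>"
    and nontrivial: "(0::'e) \<noteq> 1"
begin

lemma embed_alg_norm: "\<iota> (alg_norm \<iota> \<sigma> y) = y * \<sigma> y"
  unfolding alg_norm_def by (rule f_inv_into_f[OF norm_in_F])

lemma alg_norm_power: "alg_norm \<iota> \<sigma> (y ^ k) = alg_norm \<iota> \<sigma> y ^ k"
proof -
  have "\<iota> (alg_norm \<iota> \<sigma> (y ^ k)) = y ^ k * \<sigma> y ^ k"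
    by (simp add: embed_alg_norm invol_power)
  also have "\<dots> = (y * \<sigma> y) ^ k"
    by (rule power_mult_distrib_central) (metis embed_alg_norm embed_central)
  also have "\<dots> = \<iota> (alg_norm \<iota> \<sigma> y ^ k)"
    by (simp add: embed_alg_norm embed_power)
  finally show ?thesis using inj_embed by (auto dest: injD)
qed

lemma crd_norm_expansion:
  "crd (y * \<sigma> y) l = (\<Sum>i<d. \<Sum>j<d. crd y i * crd y j * crd (b i * \<sigma> (b j)) l)"
proof -
  have "y * \<sigma> y = (\<Sum>i<d. \<iota> (crd y i) * b i) * (\<Sum>j<d. \<sigma> (b j) * \<iota> (crd y j))"
    by (subst (1 2) crd_repr) (simp add: invol_sum invol_mult invol_embed)
  also have "\<dots> = (\<Sum>i<d. \<Sum>j<d. \<iota> (crd y i * crd y j) * (b i * \<sigma> (b j)))"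
  proof -
    have "\<iota> p * x * (z * \<iota> q) = \<iota> (p * q) * (x * z)" for p q x z
      by (metis embed_central embed_mult mult.assoc)
    then show ?thesis by (simp add: sum_product)
  qed
  finally show ?thesis by (simp add: crd_sum crd_smult)
qed

text \<open>The norm is a quadratic form in the coordinates, and the coordinates are bounded on \<open>O_E\<close>.\<close>

lemma alg_norm_bounded: "\<exists>C. \<forall>y\<in>OE. val_ge v C (alg_norm \<iota> \<sigma> y)"
proof -
  obtain C where C: "\<And>y k. y \<in> OE \<Longrightarrow> val_ge v C (crd y k)" using OE_crd_bounded by blast
  obtain l where l: "crd 1 l \<noteq> 0" using crd_one_nonzero nontrivial by blast
  let ?S = "(\<lambda>(i, j). crd (b i * \<sigma> (b j)) l) ` ({..<d} \<times> {..<d})"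
  obtain K where K: "\<forall>c\<in>?S. val_ge v K c" using val_ge_finite_bound[of ?S v] by blast
  have "val_ge v (C + C + K + - v (crd 1 l)) (alg_norm \<iota> \<sigma> y)" if "y \<in> OE" for y
  proof -
    have "val_ge v (C + C + K) (crd (y * \<sigma> y) l)"
      unfolding crd_norm_expansion using K
      by (intro val_ge_sum val_ge_mult C[OF that]) force
    moreover have "val_ge v (- v (crd 1 l)) (inverse (crd 1 l))"
      using val_inverse[OF l] unfolding val_ge_def by simp
    moreover have "alg_norm \<iota> \<sigma> y = crd (y * \<sigma> y) l * inverse (crd 1 l)"
      using l by (simp flip: embed_alg_norm add: crd_embed)
    ultimately show ?thesis by (metis val_ge_mult)
  qed
  then show ?thesis by blast
qed

lemma alg_norm_OF: "y \<in> OE \<Longrightarrow> alg_norm \<iota> \<sigma> y \<in> OF v"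
  using alg_norm_bounded OE_power OF_if_powers_bounded[of _ "alg_norm \<iota> \<sigma> y" 1]
  by (metis alg_norm_power mult_1_right one_neq_zero)

text \<open>Trace trick: \<open>y + \<sigma> y\<close> is the difference of the norms of \<open>1 + y\<close>, \<open>1\<close> and \<open>y\<close>.\<close>

lemma invol_OE: "y \<in> OE \<Longrightarrow> \<sigma> y \<in> OE"
proof -
  assume y: "y \<in> OE"
  define t where "t = alg_norm \<iota> \<sigma> (1 + y) - 1 - alg_norm \<iota> \<sigma> y"
  have "t \<in> OF v"
    unfolding t_def using y OE_add[OF OE_one y] by (intro OF_diff alg_norm_OF OF_one)
  moreover have "\<iota> t = y + \<sigma> y"
    unfolding t_def
    by (simp add: embed_diff embed_add embed_one embed_alg_norm invol_add invol_one algebra_simps)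
  ultimately show "\<sigma> y \<in> OE"
    using OE_diff[OF OE_embed y] by (metis add_diff_cancel_left')
qed

lemma invol_image_OE: "\<sigma> ` OE = OE"
  using invol_OE invol_invol by (metis image_subset_iff subsetI subset_antisym image_eqI)

text \<open>Both sides are the maximal ideal, which \<open>\<sigma>\<close> preserves.\<close>

lemma E_uniformiser_twist:
  assumes "E_uniformiser OE \<pi>"
  shows "(\<lambda>s. \<pi> * s) ` OE = (\<lambda>y. y * \<sigma> \<pi>) ` OE"
proof -
  have max_ideal: "(\<lambda>s. \<pi> * s) ` OE = nonunits OE"
    using assms unfolding E_uniformiser_def by blast
  have "(\<lambda>s. \<pi> * s) ` OE = \<sigma> ` ((\<lambda>s. \<pi> * s) ` OE)"
    unfolding max_ideal using invol_image_nonunits[OF invol_image_OE] by simp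
  also have "\<dots> = (\<lambda>y. y * \<sigma> \<pi>) ` (\<sigma> ` OE)"
    by (simp add: image_image invol_mult)
  finally show ?thesis unfolding invol_image_OE .
qed

end

lemma quadratic_fixed_points:
  fixes \<iota> :: "'f::field \<Rightarrow> 'e::ring_1"
  assumes "case_quadratic \<iota> \<sigma>" and "F_algebra \<iota>" and "\<sigma> z = z"
  shows "z \<in> range \<iota>"
proof (rule ccontr)
  assume z: "z \<notin> range \<iota>"
  have q: "(0::'e) \<noteq> 1" "\<And>x y::'e. x * y = y * x" "F_dim \<iota> 2" "ring_involution \<sigma>"
    "\<And>a. \<sigma> (\<iota> a) = \<iota> a" "\<sigma> \<noteq> id"
    using assms(1) unfolding case_quadratic_def by blast+
  interpret involution \<sigma> by (rule involution.intro) (fact q(4))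
  obtain b crd where "coords \<iota> 2 b crd" using F_dim_coords[OF assms(2) q(3)] by blast
  then interpret coords \<iota> 2 b crd .
  have "\<sigma> x = x" for x
  proof -
    obtain p r where x: "x = \<iota> p + \<iota> r * z" using dim2_span[OF refl q(1) z] by blast
    show ?thesis unfolding x by (simp add: invol_add invol_mult q(5) assms(3) q(2))
  qed
  then show False using q(6) by auto
qed

lemma herm_pair_involution:
  fixes \<iota> :: "'f::field \<Rightarrow> 'e::ring_1"
  assumes alg: "F_algebra \<iota>" and E: "herm_pair \<iota> \<sigma>"
  shows "ring_involution \<sigma>" and "\<And>a. \<sigma> (\<iota> a) = \<iota> a"
proof -
  interpret F_alg \<iota> by (rule F_alg.intro) fact
  have "ring_involution \<sigma> \<and> (\<forall>a. \<sigma> (\<iota> a) = \<iota> a)"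
    using E unfolding herm_pair_def
  proof (elim disjE)
    assume "case_F \<iota> \<sigma>"
    then have "\<sigma> = id" "surj \<iota>" unfolding case_F_def by auto
    moreover have "x * y = y * x" for x y :: 'e
      using \<open>surj \<iota>\<close> by (metis surjD embed_mult mult.commute)
    ultimately show ?thesis unfolding ring_involution_def by simp
  next
    assume "case_split \<iota> \<sigma>"
    then obtain \<phi> :: "'e \<Rightarrow> 'f \<times> 'f" where \<phi>: "bij \<phi>"
      "\<And>x y. \<phi> (x + y) = (fst (\<phi> x) + fst (\<phi> y), snd (\<phi> x) + snd (\<phi> y))"
      "\<And>x y. \<phi> (x * y) = (fst (\<phi> x) * fst (\<phi> y), snd (\<phi> x) * snd (\<phi> y))"
      "\<And>a. \<phi> (\<iota> a) = (a, a)" "\<And>x. \<phi> (\<sigma> x) = (snd (\<phi> x), fst (\<phi> x))"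
      unfolding case_split_def by blast
    have inj: "\<phi> x = \<phi> y \<Longrightarrow> x = y" for x y using \<phi>(1) by (metis bij_def injD)
    show ?thesis unfolding ring_involution_def
      by (intro conjI allI; rule inj) (simp_all add: \<phi> mult.commute flip: embed_one)
  qed (auto simp: case_quadratic_def case_quaternion_def)
  then show "ring_involution \<sigma>" and "\<And>a. \<sigma> (\<iota> a) = \<iota> a" by auto
qed

lemma herm_pair_division_algebra:
  fixes \<iota> :: "'f::field \<Rightarrow> 'e::ring_1"
  assumes "F_algebra \<iota>" and "case_quadratic \<iota> \<sigma> \<or> case_quaternion \<iota> \<sigma>"
  shows "(0::'e) \<noteq> 1" and "\<And>x::'e. x \<noteq> 0 \<Longrightarrow> \<exists>y. x * y = 1 \<and> y * x = 1"
    and "\<exists>d. F_dim \<iota> d" and "\<And>y. y * \<sigma> y \<in> range \<iota>"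
proof -
  have "(0::'e) \<noteq> 1 \<and> (\<forall>x::'e. x \<noteq> 0 \<longrightarrow> (\<exists>y. x * y = 1 \<and> y * x = 1)) \<and>
    (\<exists>d. F_dim \<iota> d) \<and> (\<forall>y. y * \<sigma> y \<in> range \<iota>)"
    using assms(2)
  proof (elim disjE)
    assume q: "case_quadratic \<iota> \<sigma>"
    then have "\<sigma> (y * \<sigma> y) = y * \<sigma> y" for y
      unfolding case_quadratic_def ring_involution_def by simp
    then have "y * \<sigma> y \<in> range \<iota>" for y
      using quadratic_fixed_points[OF q assms(1)] by blast
    moreover have "\<exists>y. x * y = 1 \<and> y * x = 1" if "x \<noteq> 0" for x :: 'e
      using q that unfolding case_quadratic_def by metis
    ultimately show ?thesis using q unfolding case_quadratic_def by blast
  qed (auto simp: case_quaternion_def)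
  then show "(0::'e) \<noteq> 1" and "\<And>x::'e. x \<noteq> 0 \<Longrightarrow> \<exists>y. x * y = 1 \<and> y * x = 1"
    and "\<exists>d. F_dim \<iota> d" and "\<And>y. y * \<sigma> y \<in> range \<iota>" by blast+
qed

lemma herm_pair_uniformiser:
  fixes \<iota> :: "'f::field \<Rightarrow> 'e::ring_1"
  assumes F: "nonarch_local_field vF \<pi>F" and alg: "F_algebra \<iota>" and E: "herm_pair \<iota> \<sigma>"
    and order: "OF_order \<iota> vF OE"
    and unif: "if ramified \<iota> \<sigma> OE \<pi>F \<or> case_quaternion \<iota> \<sigma>
               then E_uniformiser OE \<pi>E else \<pi>E = \<iota> \<pi>F"
  shows "\<pi>E \<in> OE" and "\<exists>\<pi>E'. \<pi>E * \<pi>E' = 1 \<and> \<pi>E' * \<pi>E = 1"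
    and "(\<lambda>s. \<pi>E * s) ` OE = (\<lambda>y. y * \<sigma> \<pi>E) ` OE"
proof -
  interpret order_in_algebra vF \<pi>F \<iota> OE
    by (intro order_in_algebra.intro valued_field.intro F_alg.intro order_in_algebra_axioms.intro) fact+
  interpret involution \<sigma> by (rule involution.intro) (rule herm_pair_involution[OF alg E])
  have invol_embed: "\<sigma> (\<iota> a) = \<iota> a" for a by (rule herm_pair_involution[OF alg E])
  have "\<pi>E \<in> OE \<and> (\<exists>\<pi>E'. \<pi>E * \<pi>E' = 1 \<and> \<pi>E' * \<pi>E = 1) \<and> (\<lambda>s. \<pi>E * s) ` OE = (\<lambda>y. y * \<sigma> \<pi>E) ` OE"
  proof (cases "ramified \<iota> \<sigma> OE \<pi>F \<or> case_quaternion \<iota> \<sigma>")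
    case True
    then have U: "E_uniformiser OE \<pi>E" using unif by simp
    have division: "case_quadratic \<iota> \<sigma> \<or> case_quaternion \<iota> \<sigma>"
      using True unfolding ramified_def by blast
    obtain d where "F_dim \<iota> d" using herm_pair_division_algebra(3)[OF alg division] by blast
    then obtain b crd where "coords \<iota> d b crd" using F_dim_coords[OF alg] by blast
    then interpret normed_order vF \<pi>F \<iota> OE d b crd \<sigma>
      using invol_embed herm_pair_division_algebra(1,4)[OF alg division]
      by unfold_locales (simp_all add: coords_def coords_axioms_def)
    have "\<pi>E \<noteq> 0" using E_uniformiser_nonzero[OF nontrivial U] .
    then show ?thesis
      using U herm_pair_division_algebra(2)[OF alg division] E_uniformiser_twist[OF U]
      unfolding E_uniformiser_def by blast
  next
    case False
    then have \<pi>E: "\<pi>E = \<iota> \<pi>F" using unif by simp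
    have "(\<lambda>s. \<pi>E * s) ` OE = (\<lambda>y. y * \<sigma> \<pi>E) ` OE"
      unfolding \<pi>E invol_embed by (simp add: embed_central)
    then show ?thesis
      using \<pi>E OE_embed[OF OF_uniformiser] embed_inverse[OF uniformiser_nonzero] by blast
  qed
  then show "\<pi>E \<in> OE" and "\<exists>\<pi>E'. \<pi>E * \<pi>E' = 1 \<and> \<pi>E' * \<pi>E = 1"
    and "(\<lambda>s. \<pi>E * s) ` OE = (\<lambda>y. y * \<sigma> \<pi>E) ` OE" by auto
qed

lemma left_unit_mult_eq_0: "(v :: 'a::ring_1) * u = 1 \<Longrightarrow> u * a = 0 \<Longrightarrow> a = 0"
  by (metis mult.assoc mult_1_left mult_zero_right)

lemma right_unit_mult_eq_0: "(u :: 'a::ring_1) * v = 1 \<Longrightarrow> a * u = 0 \<Longrightarrow> a = 0"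
  by (metis mult.assoc mult_1_right mult_zero_left)

locale hermitian_space = involution \<sigma> for \<sigma> :: "'e::ring_1 \<Rightarrow> 'e" +
  fixes sm :: "'e \<Rightarrow> 'v::ab_group_add \<Rightarrow> 'v" and \<epsilon> :: int and B :: "'v \<Rightarrow> 'v \<Rightarrow> 'e"
  assumes module: "left_module sm"
    and form: "herm_form sm \<sigma> \<epsilon> B"
    and nondegenerate: "nondegenerate B"
begin

lemma smult_add: "sm a (x + y) = sm a x + sm a y"
  and smult_mult: "sm (a * b) x = sm a (sm b x)"
  and smult_one: "sm 1 x = x"
  using module unfolding left_module_def by blast+

lemma smult_zero: "sm a 0 = 0"
  using smult_add[of a 0 0] by simp

lemma B_add_left: "B (x + y) z = B x z + B y z"
  and B_smult_left: "B (sm a x) y = a * B x y"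
  and B_swap: "B y x = of_int \<epsilon> * \<sigma> (B x y)"
  using form unfolding herm_form_def by blast+

lemma B_zero_left: "B 0 y = 0"
  using B_add_left[of 0 0 y] by simp

lemma B_diff_left: "B (x - x') y = B x y - B x' y"
  using B_add_left[of "x - x'" x' y] by (simp add: eq_diff_eq)

lemma B_sum_left: "B (sum f A) y = (\<Sum>i\<in>A. B (f i) y)"
  by (induction A rule: infinite_finite_induct) (simp_all add: B_zero_left B_add_left)

lemma B_add_right: "B x (y + z) = B x y + B x z"
  using B_swap[where x = "y + z" and y = x] B_swap[where x = y and y = x] B_swap[where x = z and y = x]
  by (simp add: B_add_left invol_add distrib_left)

lemma B_smult_right: "B x (sm a y) = B x y * \<sigma> a"
  using B_swap[where x = "sm a y" and y = x] B_swap[where x = y and y = x]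
  by (simp add: B_smult_left invol_mult mult.assoc)

lemma B_zero_right: "B x 0 = 0"
  using B_add_right[of x 0 0] by simp

lemma B_sum_right: "B x (sum f A) = (\<Sum>i\<in>A. B x (f i))"
  by (induction A rule: infinite_finite_induct) (simp_all add: B_zero_right B_add_right)

lemma smult_unit_cancel: "u * u' = 1 \<Longrightarrow> u' * u = 1 \<Longrightarrow> sm u' (sm u x) = x"
  by (simp flip: smult_mult add: smult_one)

lemma pE_pow_neg: "pE_pow sm \<pi> (- int k) M = {x. sm (\<pi> ^ k) x \<in> M}"
  by (cases "k = 0") (auto simp: pE_pow_def smult_one)

end

locale hermitian_setting = order_in_algebra vF \<pi>F \<iota> OE + hermitian_space \<sigma> sm \<epsilon> B
  for vF :: "'f::field \<Rightarrow> int" and \<pi>F :: 'f and \<iota> :: "'f \<Rightarrow> 'e::ring_1" and OE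
    and \<sigma> and sm :: "'e \<Rightarrow> 'v::ab_group_add \<Rightarrow> 'v" and \<epsilon> B +
  fixes \<pi>E \<pi>E' :: 'e
  assumes invol_embed: "\<sigma> (\<iota> a) = \<iota> a"
    and \<pi>E_right_inverse: "\<pi>E * \<pi>E' = 1" and \<pi>E_left_inverse: "\<pi>E' * \<pi>E = 1"
    and \<pi>E_OE: "\<pi>E \<in> OE"
    and \<pi>E_twist: "(\<lambda>s. \<pi>E * s) ` OE = (\<lambda>y. y * \<sigma> \<pi>E) ` OE"
begin

abbreviation Fsp :: "'v set \<Rightarrow> 'v set" where
  "Fsp M \<equiv> Fspan sm \<iota> \<pi>F M"

lemma Fspan_iff: "z \<in> Fsp M \<longleftrightarrow> (\<exists>m. sm (\<iota> (\<pi>F ^ m)) z \<in> M)"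
  unfolding Fspan_def by simp

lemma subset_Fspan: "M \<subseteq> Fsp M"
  unfolding Fspan_def using smult_one embed_one by (auto intro!: exI[of _ 0])

lemma embed_power_inverse: "\<iota> (\<pi>F ^ m) * \<iota> (inverse \<pi>F ^ m) = 1" "\<iota> (inverse \<pi>F ^ m) * \<iota> (\<pi>F ^ m) = 1"
  using embed_inverse[of "\<pi>F ^ m"] uniformiser_nonzero by (simp_all add: power_inverse)

lemma \<pi>E_power_inverse: "\<pi>E ^ k * \<pi>E' ^ k = 1" "\<pi>E' ^ k * \<pi>E ^ k = 1"
  using left_right_inverse_power \<pi>E_right_inverse \<pi>E_left_inverse by blast+

lemma OE_embed_power: "\<iota> (\<pi>F ^ m) \<in> OE"
  using OE_embed[OF OF_uniformiser] OE_power embed_power by metis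

lemma B_embed_cancel_left: "B (sm (\<iota> (\<pi>F ^ m)) x) y = 0 \<Longrightarrow> B x y = 0"
  using left_unit_mult_eq_0[OF embed_power_inverse(2)] by (simp add: B_smult_left)

lemma B_embed_cancel_right: "B x (sm (\<iota> (\<pi>F ^ m)) y) = B x' (sm (\<iota> (\<pi>F ^ m)) y) \<Longrightarrow> B x y = B x' y"
  using right_unit_mult_eq_0[OF embed_power_inverse(1), of "B x y - B x' y"]
  by (simp add: B_smult_right invol_embed left_diff_distrib)

lemma Fspan_smult:
  assumes "\<And>e x. e \<in> OE \<Longrightarrow> x \<in> M \<Longrightarrow> sm e x \<in> M" and "x \<in> M"
  shows "sm a x \<in> Fsp M"
proof -
  obtain m where "\<iota> (\<pi>F ^ m) * a \<in> OE" using OE_denominator by blast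
  then show ?thesis using assms unfolding Fspan_iff by (metis smult_mult)
qed

lemma twist_left: "s \<in> OE \<Longrightarrow> \<exists>y\<in>OE. \<pi>E * s = y * \<sigma> \<pi>E"
proof -
  assume "s \<in> OE"
  then have "\<pi>E * s \<in> (\<lambda>s. \<pi>E * s) ` OE" by blast
  then show ?thesis unfolding \<pi>E_twist by blast
qed

lemma twist_right: "y \<in> OE \<Longrightarrow> \<exists>s\<in>OE. y * \<sigma> \<pi>E = \<pi>E * s"
proof -
  assume "y \<in> OE"
  then have "y * \<sigma> \<pi>E \<in> (\<lambda>y. y * \<sigma> \<pi>E) ` OE" by blast
  then show ?thesis unfolding \<pi>E_twist[symmetric] by blast
qed

lemma \<pi>E_cancel_left: "\<pi>E * u = \<pi>E * w \<Longrightarrow> u = w"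
  by (metis \<pi>E_left_inverse mult.assoc mult_1_left)

lemma \<sigma>\<pi>E_cancel_right: "u * \<sigma> \<pi>E = w * \<sigma> \<pi>E \<Longrightarrow> u = w"
  by (metis invol_unit[OF \<pi>E_left_inverse] mult.assoc mult_1_right)

lemma Fspan_add:
  assumes "\<And>k a. a \<in> A \<Longrightarrow> sm (\<iota> (\<pi>F ^ k)) a \<in> A" and "\<And>k b. b \<in> C \<Longrightarrow> sm (\<iota> (\<pi>F ^ k)) b \<in> C"
    and "x \<in> Fsp A" and "y \<in> Fsp C"
  shows "x + y \<in> Fsp {a + b | a b. a \<in> A \<and> b \<in> C}"
proof -
  obtain m1 m2 where "sm (\<iota> (\<pi>F ^ m1)) x \<in> A" "sm (\<iota> (\<pi>F ^ m2)) y \<in> C"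
    using assms(3,4) unfolding Fspan_iff by blast
  then have "sm (\<iota> (\<pi>F ^ m2)) (sm (\<iota> (\<pi>F ^ m1)) x) \<in> A" "sm (\<iota> (\<pi>F ^ m1)) (sm (\<iota> (\<pi>F ^ m2)) y) \<in> C"
    using assms(1,2) by blast+
  moreover have "sm (\<iota> (\<pi>F ^ (m1 + m2))) (x + y) =
      sm (\<iota> (\<pi>F ^ m2)) (sm (\<iota> (\<pi>F ^ m1)) x) + sm (\<iota> (\<pi>F ^ m1)) (sm (\<iota> (\<pi>F ^ m2)) y)"
    by (simp flip: smult_mult embed_mult add: smult_add power_add mult.commute)
  ultimately have "sm (\<iota> (\<pi>F ^ (m1 + m2))) (x + y) \<in> {a + b | a b. a \<in> A \<and> b \<in> C}"
    by auto
  then show ?thesis unfolding Fspan_iff by blast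
qed

end

lemma sum_atMost_single:
  fixes f :: "nat \<Rightarrow> 'a::comm_monoid_add"
  assumes "k \<le> n" and "\<And>l. l \<le> n \<Longrightarrow> l \<noteq> k \<Longrightarrow> f l = 0"
  shows "(\<Sum>l\<le>n. f l) = f k"
  using sum.mono_neutral_left[of "{..n}" "{k}" f] assms by auto

locale graded_lattice = hermitian_setting vF \<pi>F \<iota> OE \<sigma> sm \<epsilon> B \<pi>E \<pi>E'
  for vF :: "'f::field \<Rightarrow> int" and \<pi>F \<iota> OE \<sigma> and sm :: "'e::ring_1 \<Rightarrow> 'v::ab_group_add \<Rightarrow> 'v"
    and \<epsilon> B \<pi>E \<pi>E' +
  fixes M :: "'v set" and Ms :: "nat \<Rightarrow> 'v set" and n :: nat
  assumes part_subset: "k \<le> n \<Longrightarrow> Ms k \<subseteq> M"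
    and decomposition: "m \<in> M \<Longrightarrow> \<exists>c. (\<forall>k\<le>n. c k \<in> Ms k) \<and> m = (\<Sum>k\<le>n. c k)"
    and full_rank: "\<exists>m. sm (\<iota> (\<pi>F ^ m)) y \<in> M"
    and orthogonal_parts:
      "k \<le> n \<Longrightarrow> l \<le> n \<Longrightarrow> k \<noteq> l \<Longrightarrow> z \<in> Fsp (Ms k) \<Longrightarrow> y \<in> Ms l \<Longrightarrow> B z y = 0"
    and Fspan_part_smult: "k \<le> n \<Longrightarrow> x \<in> Ms k \<Longrightarrow> sm a x \<in> Fsp (Ms k)"
    and scaled_part: "k \<le> n \<Longrightarrow> x \<in> Ms k \<Longrightarrow> y \<in> Ms k \<Longrightarrow> \<exists>e\<in>OE. B x y = \<pi>E ^ k * e"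
    and dual_part:
      "k \<le> n \<Longrightarrow> z \<in> Fsp (Ms k) \<Longrightarrow> \<forall>y\<in>Ms k. B z y \<in> OE \<Longrightarrow> sm (\<pi>E ^ k) z \<in> Ms k"
begin

lemma B_sum_parts_left:
  assumes "\<forall>k\<le>n. c k \<in> Fsp (Ms k)" and "i \<le> n" and "y \<in> Ms i"
  shows "B (\<Sum>k\<le>n. c k) y = B (c i) y"
  unfolding B_sum_left using assms orthogonal_parts by (intro sum_atMost_single) auto

lemma B_sum_parts_right:
  assumes "x \<in> Fsp (Ms j)" and "j \<le> n" and "\<forall>l\<le>n. y l \<in> Ms l"
  shows "B x (\<Sum>l\<le>n. y l) = B x (y j)"
  unfolding B_sum_right using assms orthogonal_parts by (intro sum_atMost_single) auto

text \<open>By nondegeneracy, a component is determined by its pairings with the parts.\<close>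

lemma decomposition_unique:
  assumes c: "\<forall>k\<le>n. c k \<in> Fsp (Ms k)" and c': "\<forall>k\<le>n. c' k \<in> Fsp (Ms k)"
    and sum_eq: "(\<Sum>k\<le>n. c k) = (\<Sum>k\<le>n. c' k)" and k: "k \<le> n"
  shows "c k = c' k"
proof -
  have "B (c k - c' k) y = 0" for y
  proof -
    obtain m where "sm (\<iota> (\<pi>F ^ m)) y \<in> M" using full_rank by blast
    then obtain yl where yl: "\<forall>l\<le>n. yl l \<in> Ms l" "sm (\<iota> (\<pi>F ^ m)) y = (\<Sum>l\<le>n. yl l)"
      using decomposition by blast
    have "B (c k) (sm (\<iota> (\<pi>F ^ m)) y) = B (c' k) (sm (\<iota> (\<pi>F ^ m)) y)"
    proof -
      have "B (c k) (\<Sum>l\<le>n. yl l) = B (c k) (yl k)"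
        by (rule B_sum_parts_right) (use c k yl(1) in auto)
      also have "\<dots> = B (\<Sum>l\<le>n. c l) (yl k)"
        by (rule B_sum_parts_left[symmetric]) (use c k yl(1) in auto)
      also have "\<dots> = B (c' k) (yl k)"
        unfolding sum_eq by (rule B_sum_parts_left) (use c' k yl(1) in auto)
      also have "\<dots> = B (c' k) (\<Sum>l\<le>n. yl l)"
        by (rule B_sum_parts_right[symmetric]) (use c' k yl(1) in auto)
      finally show ?thesis unfolding yl(2) .
    qed
    then have "B (c k) y = B (c' k) y" by (rule B_embed_cancel_right)
    then show ?thesis by (simp add: B_diff_left)
  qed
  then have "c k - c' k = 0" using nondegenerate unfolding nondegenerate_def by blast
  then show ?thesis by simp
qed

lemma component_decomposition:
  assumes c: "\<forall>k\<le>n. c k \<in> Ms k" and i: "i \<le> n"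
  shows "component sm \<iota> \<pi>F Ms n (\<Sum>k\<le>n. c k) i = c i"
proof -
  define c0 where "c0 k = (if k \<le> n then c k else 0)" for k
  let ?P = "\<lambda>c'. (\<forall>k\<le>n. c' k \<in> Fsp (Ms k)) \<and> (\<forall>k>n. c' k = 0) \<and> (\<Sum>k\<le>n. c k) = (\<Sum>k\<le>n. c' k)"
  have "c0 k \<in> Fsp (Ms k)" if "k \<le> n" for k
    using c that subset_Fspan[of "Ms k"] unfolding c0_def by auto
  moreover have "(\<Sum>k\<le>n. c k) = (\<Sum>k\<le>n. c0 k)"
    unfolding c0_def by (rule sum.cong) auto
  ultimately have P_c0: "?P c0" unfolding c0_def by simp
  moreover have "c' = c0" if "?P c'" for c'
  proof
    fix k
    show "c' k = c0 k"
    proof (cases "k \<le> n")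
      case True
      then show ?thesis using that P_c0 decomposition_unique[of c' c0 k] by simp
    next
      case False
      then show ?thesis using that unfolding c0_def by simp
    qed
  qed
  ultimately have the_c0: "(THE c'. ?P c') = c0" by (rule the_equality)
  show ?thesis unfolding component_def the_c0 using i by (simp add: c0_def)
qed

lemma B_part_divisible:
  assumes "j \<le> n" and "x \<in> Ms j" and "u \<in> M"
  shows "\<exists>e\<in>OE. B x u = \<pi>E ^ j * e"
proof -
  obtain d where d: "\<forall>k\<le>n. d k \<in> Ms k" "u = (\<Sum>k\<le>n. d k)" using decomposition[OF \<open>u \<in> M\<close>] by blast
  have "B x u = B x (d j)"
    unfolding d(2) using assms subset_Fspan d(1) by (intro B_sum_parts_right) auto
  then show ?thesis using scaled_part assms d(1) by simp
qed

lemma divisible_part: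
  assumes i: "i \<le> n" and x: "x \<in> Ms i" and div: "\<forall>y\<in>Ms i. \<exists>e\<in>OE. B x y = \<pi>E ^ (i + d) * e"
  shows "x \<in> pE_pow sm \<pi>E (int d) (Ms i)"
proof -
  define w where "w = sm (\<pi>E' ^ (i + d)) x"
  have "B w y \<in> OE" if "y \<in> Ms i" for y
  proof -
    obtain e where "e \<in> OE" "B x y = \<pi>E ^ (i + d) * e" using div \<open>y \<in> Ms i\<close> by blast
    then show ?thesis
      using \<pi>E_power_inverse(2)[of "i + d"] by (simp add: w_def B_smult_left mult.assoc[symmetric])
  qed
  then have w: "sm (\<pi>E ^ i) w \<in> Ms i"
    using dual_part[OF i] Fspan_part_smult[OF i x] unfolding w_def by blast
  have "\<pi>E ^ d * (\<pi>E ^ i * \<pi>E' ^ (i + d)) = 1"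
    using \<pi>E_power_inverse(1)[of "i + d"]
    by (simp add: mult.assoc[symmetric] power_add[symmetric] add.commute)
  then have "x = sm (\<pi>E ^ d) (sm (\<pi>E ^ i) w)"
    unfolding w_def smult_mult[symmetric] by (simp add: smult_one)
  then show ?thesis using w unfolding pE_pow_def by auto
qed

text \<open>An isometry moves the pairing with a component back to a pairing with \<open>x\<close>.\<close>

theorem component_isometry:
  assumes g: "g \<in> stabiliser sm B M" and ij: "i \<le> j" "j \<le> n" and x: "x \<in> Ms j"
  shows "component sm \<iota> \<pi>F Ms n (g x) i \<in> pE_pow sm \<pi>E (int j - int i) (Ms i)"
proof -
  have isometry: "B (g u) (g w) = B u w" for u w
    using g unfolding stabiliser_def isometry_def by auto
  have gM: "g ` M = M" using g unfolding stabiliser_def by auto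
  have "g x \<in> M" using x part_subset[OF ij(2)] gM by blast
  then obtain c where c: "\<forall>k\<le>n. c k \<in> Ms k" "g x = (\<Sum>k\<le>n. c k)" using decomposition by blast
  have i: "i \<le> n" using ij by simp
  have ci: "c i \<in> Ms i" using c(1) i by blast
  have div: "\<exists>e\<in>OE. B (c i) y = \<pi>E ^ (i + (j - i)) * e" if y: "y \<in> Ms i" for y
  proof -
    obtain u where u: "u \<in> M" "y = g u" using y part_subset[OF i] gM by blast
    have "B (c i) y = B (g x) y"
      unfolding c(2) using c(1) subset_Fspan y i by (intro B_sum_parts_left[symmetric]) auto
    also have "\<dots> = B x u" using u isometry by simp
    finally show ?thesis using B_part_divisible[OF ij(2) x u(1)] ij by simp
  qed
  have "c i \<in> pE_pow sm \<pi>E (int (j - i)) (Ms i)"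
    by (rule divisible_part[OF i ci]) (use div in blast)
  moreover have "component sm \<iota> \<pi>F Ms n (g x) i = c i"
    unfolding c(2) using component_decomposition[OF c(1) i] .
  ultimately show ?thesis using ij by (simp add: of_nat_diff)
qed

end

locale jordan_lattice = hermitian_setting vF \<pi>F \<iota> OE \<sigma> sm \<epsilon> B \<pi>E \<pi>E'
  for vF :: "'f::field \<Rightarrow> int" and \<pi>F \<iota> OE \<sigma> and sm :: "'e::ring_1 \<Rightarrow> 'v::ab_group_add \<Rightarrow> 'v"
    and \<epsilon> B \<pi>E \<pi>E' +
  fixes L :: "'v set" and Ls :: "nat \<Rightarrow> 'v set" and N :: nat
  assumes jordan: "jordan_splitting sm \<iota> \<pi>F OE \<pi>E B L Ls N"
    and L_full_rank: "Fsp L = UNIV"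
begin

lemma part_zero: "k \<le> N \<Longrightarrow> 0 \<in> Ls k"
  and part_smult: "k \<le> N \<Longrightarrow> e \<in> OE \<Longrightarrow> x \<in> Ls k \<Longrightarrow> sm e x \<in> Ls k"
  using jordan unfolding jordan_splitting_def fg_submodule_def by blast+

lemma part_subset_L: "k \<le> N \<Longrightarrow> Ls k \<subseteq> L"
  and L_decomposition: "m \<in> L \<Longrightarrow> \<exists>c. (\<forall>k\<le>N. c k \<in> Ls k) \<and> m = (\<Sum>k\<le>N. c k)"
  using jordan unfolding jordan_splitting_def direct_decomp_def by blast+

lemma parts_orthogonal: "k \<le> N \<Longrightarrow> l \<le> N \<Longrightarrow> k \<noteq> l \<Longrightarrow> x \<in> Ls k \<Longrightarrow> y \<in> Ls l \<Longrightarrow> B x y = 0"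
  using jordan unfolding jordan_splitting_def orthogonal_family_def by blast

lemma dual_part_iff:
  "k \<le> N \<Longrightarrow> z \<in> Fsp (Ls k) \<and> (\<forall>y\<in>Ls k. B z y \<in> OE) \<longleftrightarrow> sm (\<pi>E ^ k) z \<in> Ls k"
  using jordan unfolding jordan_splitting_def dual_in_def pE_pow_neg by blast

lemma part_smult_embed_power: "k \<le> N \<Longrightarrow> x \<in> Ls k \<Longrightarrow> sm (\<iota> (\<pi>F ^ m)) x \<in> Ls k"
  using part_smult OE_embed_power by blast

lemma Fspan_part_smult: "k \<le> N \<Longrightarrow> x \<in> Ls k \<Longrightarrow> sm a x \<in> Fsp (Ls k)"
  by (rule Fspan_smult) (auto intro: part_smult)

lemma smult_Fspan_part: "k \<le> N \<Longrightarrow> w \<in> Fsp (Ls k) \<Longrightarrow> sm a w \<in> Fsp (Ls k)"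
proof -
  assume k: "k \<le> N" and "w \<in> Fsp (Ls k)"
  then obtain m where m: "sm (\<iota> (\<pi>F ^ m)) w \<in> Ls k" unfolding Fspan_iff by blast
  have "sm a w = sm (a * \<iota> (inverse \<pi>F ^ m)) (sm (\<iota> (\<pi>F ^ m)) w)"
    by (simp flip: smult_mult add: mult.assoc embed_power_inverse smult_one)
  then show ?thesis using Fspan_part_smult[OF k m] by simp
qed

lemma Fspan_parts_orthogonal:
  assumes "k \<le> N" "l \<le> N" "k \<noteq> l" "z \<in> Fsp (Ls k)" "y \<in> Ls l"
  shows "B z y = 0"
proof -
  obtain m where "sm (\<iota> (\<pi>F ^ m)) z \<in> Ls k" using assms(4) unfolding Fspan_iff by blast
  then show ?thesis using assms parts_orthogonal B_embed_cancel_left by blast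
qed

lemma part_scaled: "k \<le> N \<Longrightarrow> x \<in> Ls k \<Longrightarrow> y \<in> Ls k \<Longrightarrow> \<exists>e\<in>OE. B x y = \<pi>E ^ k * e"
proof -
  assume k: "k \<le> N" and x: "x \<in> Ls k" and y: "y \<in> Ls k"
  define w where "w = sm (\<pi>E' ^ k) x"
  have "sm (\<pi>E ^ k) w = x" unfolding w_def by (simp flip: smult_mult add: \<pi>E_power_inverse smult_one)
  then have "B w y \<in> OE" using dual_part_iff[OF k, of w] x y by auto
  moreover have "B x y = \<pi>E ^ k * B w y"
    using \<open>sm (\<pi>E ^ k) w = x\<close> B_smult_left by metis
  ultimately show ?thesis by blast
qed

end

sublocale jordan_lattice \<subseteq> L: graded_lattice vF \<pi>F \<iota> OE \<sigma> sm \<epsilon> B \<pi>E \<pi>E' L Ls N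
proof unfold_locales
  show "\<exists>m. sm (\<iota> (\<pi>F ^ m)) y \<in> L" for y
    using L_full_rank Fspan_iff[of y L] by blast
  show "k \<le> N \<Longrightarrow> z \<in> Fsp (Ls k) \<Longrightarrow> \<forall>y\<in>Ls k. B z y \<in> OE \<Longrightarrow> sm (\<pi>E ^ k) z \<in> Ls k" for k z
    using dual_part_iff by blast
qed (use part_subset_L L_decomposition Fspan_parts_orthogonal Fspan_part_smult part_scaled in auto)

locale jordan_lattice_N2 = jordan_lattice vF \<pi>F \<iota> OE \<sigma> sm \<epsilon> B \<pi>E \<pi>E' L Ls N
  for vF :: "'f::field \<Rightarrow> int" and \<pi>F \<iota> OE \<sigma> and sm :: "'e::ring_1 \<Rightarrow> 'v::ab_group_add \<Rightarrow> 'v"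
    and \<epsilon> B \<pi>E \<pi>E' L Ls N +
  assumes two_le_N: "2 \<le> N"
begin

abbreviation Lp :: "nat \<Rightarrow> 'v set" where
  "Lp \<equiv> Lprime_parts sm \<pi>E Ls N"

text \<open>The lattice \<open>p_E^-1 L_N\<close>, which is merged into \<open>L'_(N-2)\<close>.\<close>

abbreviation Lshift :: "'v set" where
  "Lshift \<equiv> {x. sm \<pi>E x \<in> Ls N}"

lemma Lp_N2: "Lp (N - 2) = {a + b | a b. a \<in> Ls (N - 2) \<and> b \<in> Lshift}"
  using pE_pow_neg[of \<pi>E 1 "Ls N"] unfolding Lprime_parts_def by simp

lemma Lp_other: "k \<noteq> N - 2 \<Longrightarrow> Lp k = Ls k"
  unfolding Lprime_parts_def by simp

lemma N2_le: "N - 2 \<le> N" and N2_ne: "N - 2 \<noteq> N"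
  using two_le_N by simp_all

lemma \<pi>E_power_N: "\<pi>E ^ N = \<pi>E * \<pi>E ^ (N - 2) * \<pi>E"
proof -
  have "N = Suc (Suc (N - 2))" using two_le_N by simp
  then show ?thesis by (metis power_Suc power_Suc2 mult.assoc)
qed

lemma zero_Lshift: "0 \<in> Lshift"
  using smult_zero part_zero[of N] by simp

lemma Lshift_smult_embed_power: "b \<in> Lshift \<Longrightarrow> sm (\<iota> (\<pi>F ^ m)) b \<in> Lshift"
  using part_smult_embed_power[of N "sm \<pi>E b" m] by (simp flip: smult_mult add: embed_central)

lemma Lshift_Fspan: "b \<in> Lshift \<Longrightarrow> b \<in> Fsp (Ls N)"
  using Fspan_part_smult[of N "sm \<pi>E b" \<pi>E'] by (simp flip: smult_mult add: \<pi>E_left_inverse smult_one)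

lemma Fspan_LN_subset: "Fsp (Ls N) \<subseteq> Fsp Lshift"
  unfolding Fspan_def using part_smult[OF order_refl \<pi>E_OE] by auto

lemma B_Lshift_right:
  assumes "k \<le> N" "k \<noteq> N" "a \<in> Fsp (Ls k)" "b \<in> Lshift"
  shows "B a b = 0"
proof -
  have "B a (sm \<pi>E b) = 0"
    using Fspan_parts_orthogonal[OF assms(1) order_refl assms(2,3)] assms(4) by simp
  then have "B a b * \<sigma> \<pi>E = 0 * \<sigma> \<pi>E" by (simp add: B_smult_right)
  then show ?thesis by (rule \<sigma>\<pi>E_cancel_right)
qed

lemma B_Lshift_scaled:
  assumes b: "b \<in> Lshift" and b': "b' \<in> Lshift"
  shows "\<exists>y\<in>OE. B b b' = \<pi>E ^ (N - 2) * y"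
proof -
  obtain e where e: "e \<in> OE" "B (sm \<pi>E b) (sm \<pi>E b') = \<pi>E ^ N * e"
    using part_scaled[OF order_refl] b b' by blast
  obtain y where y: "y \<in> OE" "\<pi>E * e = y * \<sigma> \<pi>E" using twist_left[OF e(1)] by blast
  have "\<pi>E * (B b b' * \<sigma> \<pi>E) = \<pi>E * (\<pi>E ^ (N - 2) * y * \<sigma> \<pi>E)"
    using e(2) y(2) unfolding \<pi>E_power_N by (simp add: B_smult_left B_smult_right mult.assoc)
  then have "B b b' * \<sigma> \<pi>E = \<pi>E ^ (N - 2) * y * \<sigma> \<pi>E" by (rule \<pi>E_cancel_left)
  then have "B b b' = \<pi>E ^ (N - 2) * y" by (rule \<sigma>\<pi>E_cancel_right)
  then show ?thesis using y(1) by blast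
qed

lemma Fspan_Lp_N2:
  assumes "z \<in> Fsp (Lp (N - 2))"
  obtains za zb where "z = za + zb" "za \<in> Fsp (Ls (N - 2))" "zb \<in> Fsp (Ls N)"
proof -
  obtain m a b where ab: "sm (\<iota> (\<pi>F ^ m)) z = a + b" "a \<in> Ls (N - 2)" "b \<in> Lshift"
    using assms unfolding Fspan_iff Lp_N2 by blast
  let ?u = "\<iota> (inverse \<pi>F ^ m)"
  have "z = sm ?u (sm (\<iota> (\<pi>F ^ m)) z)"
    using smult_unit_cancel[OF embed_power_inverse] by simp
  then have "z = sm ?u a + sm ?u b" unfolding ab(1) smult_add .
  moreover have "sm ?u a \<in> Fsp (Ls (N - 2))" using Fspan_part_smult[OF N2_le ab(2)] .
  moreover have "sm ?u b \<in> Fsp (Ls N)" using smult_Fspan_part[OF order_refl Lshift_Fspan[OF ab(3)]] .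
  ultimately show ?thesis using that by blast
qed

lemma Lprime_Fspan_part_smult:
  assumes "k \<le> N - 1" and "x \<in> Lp k"
  shows "sm a x \<in> Fsp (Lp k)"
proof (cases "k = N - 2")
  case True
  then obtain u b where ub: "x = u + b" "u \<in> Ls (N - 2)" "b \<in> Lshift" using assms(2) Lp_N2 by auto
  have "sm a u \<in> Fsp (Ls (N - 2))" using Fspan_part_smult[OF N2_le ub(2)] .
  moreover have "sm a b \<in> Fsp Lshift"
    using smult_Fspan_part[OF order_refl Lshift_Fspan[OF ub(3)]] Fspan_LN_subset by blast
  ultimately show ?thesis
    unfolding True Lp_N2 ub(1) smult_add
    using part_smult_embed_power[OF N2_le] Lshift_smult_embed_power by (intro Fspan_add) auto
next
  case False
  then show ?thesis using assms Fspan_part_smult[of k x a] Lp_other by simp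
qed

lemma Lp_zero: "k < N \<Longrightarrow> 0 \<in> Lp k"
proof (cases "k = N - 2")
  case True
  have "0 + 0 \<in> Lp (N - 2)" using part_zero[OF N2_le] zero_Lshift unfolding Lp_N2 by blast
  then show ?thesis using True by simp
qed (simp add: Lp_other part_zero)

lemma Lprime_part_subset: "k \<le> N - 1 \<Longrightarrow> Lp k \<subseteq> Lprime sm \<pi>E Ls N"
proof
  fix x assume k: "k \<le> N - 1" and x: "x \<in> Lp k"
  have kN: "k < N" using k two_le_N by simp
  define c where "c i = (if i = k then x else 0)" for i
  have "\<forall>i<N. c i \<in> Lp i" using x Lp_zero unfolding c_def by auto
  moreover have "x = (\<Sum>i<N. c i)" unfolding c_def using kN by simp
  ultimately show "x \<in> Lprime sm \<pi>E Ls N" unfolding Lprime_def by blast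
qed

lemma Lprime_decomposition:
  assumes "m \<in> Lprime sm \<pi>E Ls N"
  shows "\<exists>c. (\<forall>k\<le>N - 1. c k \<in> Lp k) \<and> m = (\<Sum>k\<le>N - 1. c k)"
proof -
  obtain c where c: "\<forall>i<N. c i \<in> Lp i" "m = (\<Sum>i<N. c i)"
    using assms unfolding Lprime_def by blast
  have "{..N - 1} = {..<N}" using two_le_N by auto
  moreover have "\<forall>k\<le>N - 1. c k \<in> Lp k" using c(1) two_le_N by auto
  ultimately show ?thesis using c(2) by (intro exI[of _ c]) simp
qed

lemma Lprime_full_rank: "\<exists>m. sm (\<iota> (\<pi>F ^ m)) y \<in> Lprime sm \<pi>E Ls N"
proof -
  obtain m where "sm (\<iota> (\<pi>F ^ m)) y \<in> L" using L.full_rank by blast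
  then obtain yl where yl: "\<forall>k\<le>N. yl k \<in> Ls k" "sm (\<iota> (\<pi>F ^ m)) y = (\<Sum>k\<le>N. yl k)"
    using L_decomposition by blast
  define c where "c i = (if i = N - 2 then yl i + yl N else yl i)" for i
  have "yl N \<in> Lshift" using part_smult[OF order_refl \<pi>E_OE] yl(1) by simp
  then have "yl (N - 2) + yl N \<in> Lp (N - 2)" using yl(1) N2_le unfolding Lp_N2 by blast
  then have "\<forall>i<N. c i \<in> Lp i"
    using yl(1) Lp_other unfolding c_def by auto
  moreover have "(\<Sum>i<N. c i) = (\<Sum>i<N. yl i + (if i = N - 2 then yl N else 0))"
    unfolding c_def by (intro sum.cong) auto
  then have "(\<Sum>i<N. c i) = (\<Sum>k\<le>N. yl k)"
    using two_le_N by (simp add: sum.distrib lessThan_Suc_atMost[symmetric])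
  ultimately have "sm (\<iota> (\<pi>F ^ m)) y \<in> Lprime sm \<pi>E Ls N"
    unfolding Lprime_def yl(2) mem_Collect_eq by (intro exI[of _ c]) simp
  then show ?thesis by blast
qed

lemma Lprime_orthogonal:
  assumes k: "k \<le> N - 1" and l: "l \<le> N - 1" and "k \<noteq> l" and z: "z \<in> Fsp (Lp k)" and y: "y \<in> Lp l"
  shows "B z y = 0"
proof (cases "k = N - 2")
  case True
  then have yl: "y \<in> Ls l" using y Lp_other \<open>k \<noteq> l\<close> by simp
  obtain za zb where "z = za + zb" "za \<in> Fsp (Ls (N - 2))" "zb \<in> Fsp (Ls N)"
    using Fspan_Lp_N2 z True by blast
  moreover have "l \<le> N" "l \<noteq> N" "N - 2 \<noteq> l" using l two_le_N True \<open>k \<noteq> l\<close> by auto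
  ultimately show ?thesis
    using Fspan_parts_orthogonal[of "N - 2" l za y] Fspan_parts_orthogonal[of N l zb y] yl N2_le
    by (simp add: B_add_left)
next
  case False
  then have zk: "z \<in> Fsp (Ls k)" using z Lp_other by simp
  show ?thesis
  proof (cases "l = N - 2")
    case True
    then obtain a b where "y = a + b" "a \<in> Ls (N - 2)" "b \<in> Lshift" using y Lp_N2 by auto
    then show ?thesis
      using Fspan_parts_orthogonal[OF _ N2_le _ zk] B_Lshift_right[OF _ _ zk] False k two_le_N
      by (simp add: B_add_right)
  next
    case False
    moreover have "k \<le> N" "l \<le> N" using k l by auto
    ultimately show ?thesis using Fspan_parts_orthogonal[of k l z y] zk y \<open>k \<noteq> l\<close> Lp_other by simp
  qed
qed

lemma Lprime_scaled:
  assumes "k \<le> N - 1" and x: "x \<in> Lp k" and y: "y \<in> Lp k"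
  shows "\<exists>e\<in>OE. B x y = \<pi>E ^ k * e"
proof (cases "k = N - 2")
  case True
  obtain a b where ab: "x = a + b" "a \<in> Ls (N - 2)" "b \<in> Lshift" using x True Lp_N2 by auto
  obtain a' b' where ab': "y = a' + b'" "a' \<in> Ls (N - 2)" "b' \<in> Lshift" using y True Lp_N2 by auto
  have "B a b' = 0" using B_Lshift_right[OF N2_le N2_ne _ ab'(3)] ab(2) subset_Fspan by blast
  moreover have "B b a' = 0"
    using Fspan_parts_orthogonal[OF order_refl N2_le _ Lshift_Fspan[OF ab(3)] ab'(2)] N2_ne by simp
  moreover obtain e1 where "e1 \<in> OE" "B a a' = \<pi>E ^ (N - 2) * e1"
    using part_scaled[OF N2_le ab(2) ab'(2)] by blast
  moreover obtain e2 where "e2 \<in> OE" "B b b' = \<pi>E ^ (N - 2) * e2"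
    using B_Lshift_scaled[OF ab(3) ab'(3)] by blast
  ultimately have "B x y = \<pi>E ^ k * (e1 + e2)" "e1 + e2 \<in> OE"
    unfolding ab(1) ab'(1) True by (simp_all add: B_add_left B_add_right distrib_left OE_add)
  then show ?thesis by blast
next
  case False
  then show ?thesis using assms part_scaled[of k x y] Lp_other by simp
qed

text \<open>The twist \<open>\<pi>E O_E = O_E \<sigma>(\<pi>E)\<close> is needed here because \<open>\<pi>E'\<close> enters the
  second argument of the form as \<open>\<sigma>(\<pi>E')\<close>.\<close>

lemma Lshift_dual:
  assumes zb: "zb \<in> Fsp (Ls N)" and dual: "\<forall>y\<in>Lshift. B zb y \<in> OE"
  shows "sm (\<pi>E ^ (N - 2)) zb \<in> Lshift"
proof -
  have "B (sm \<pi>E' zb) bt \<in> OE" if bt: "bt \<in> Ls N" for bt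
  proof -
    have "sm \<pi>E' bt \<in> Lshift" using bt by (simp flip: smult_mult add: \<pi>E_right_inverse smult_one)
    then have "B zb (sm \<pi>E' bt) \<in> OE" using dual by blast
    then have "B zb bt * \<sigma> \<pi>E' \<in> OE" by (simp add: B_smult_right)
    then obtain s where s: "s \<in> OE" "B zb bt * \<sigma> \<pi>E' * \<sigma> \<pi>E = \<pi>E * s" using twist_right by blast
    then have "B zb bt = \<pi>E * s" using invol_unit[OF \<pi>E_right_inverse] by (simp add: mult.assoc)
    then show ?thesis using s(1) \<pi>E_left_inverse by (simp add: B_smult_left mult.assoc[symmetric])
  qed
  then have "sm (\<pi>E ^ N) (sm \<pi>E' zb) \<in> Ls N"
    using dual_part_iff[OF order_refl] smult_Fspan_part[OF order_refl zb] by blast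
  moreover have "\<pi>E ^ N * \<pi>E' = \<pi>E * \<pi>E ^ (N - 2)"
    unfolding \<pi>E_power_N by (simp add: mult.assoc \<pi>E_right_inverse)
  ultimately show ?thesis by (simp flip: smult_mult)
qed

lemma Lprime_dual:
  assumes k: "k \<le> N - 1" and z: "z \<in> Fsp (Lp k)" and dual: "\<forall>y\<in>Lp k. B z y \<in> OE"
  shows "sm (\<pi>E ^ k) z \<in> Lp k"
proof (cases "k = N - 2")
  case True
  obtain za zb where zab: "z = za + zb" "za \<in> Fsp (Ls (N - 2))" "zb \<in> Fsp (Ls N)"
    using Fspan_Lp_N2 z True by blast
  have "B za y \<in> OE" if "y \<in> Ls (N - 2)" for y
  proof -
    have "y + 0 \<in> Lp k" using that zero_Lshift True Lp_N2 by blast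
    then have "B (za + zb) y \<in> OE" using dual zab(1) by auto
    moreover have "B zb y = 0" using Fspan_parts_orthogonal[OF order_refl N2_le _ zab(3) that] N2_ne by simp
    ultimately show ?thesis by (simp add: B_add_left)
  qed
  then have "sm (\<pi>E ^ (N - 2)) za \<in> Ls (N - 2)" using dual_part_iff[OF N2_le] zab(2) by blast
  moreover have "B zb y \<in> OE" if "y \<in> Lshift" for y
  proof -
    have "0 + y \<in> Lp k" using that part_zero[OF N2_le] True Lp_N2 by blast
    then have "B (za + zb) y \<in> OE" using dual zab(1) by auto
    moreover have "B za y = 0" using B_Lshift_right[OF N2_le N2_ne zab(2) that] .
    ultimately show ?thesis by (simp add: B_add_left)
  qed
  then have "sm (\<pi>E ^ (N - 2)) zb \<in> Lshift" using Lshift_dual zab(3) by blast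
  ultimately show ?thesis unfolding True Lp_N2 zab(1) smult_add by blast
next
  case False
  then show ?thesis using assms dual_part_iff[of k z] Lp_other by simp
qed

end

sublocale jordan_lattice_N2 \<subseteq> Lprime: graded_lattice vF \<pi>F \<iota> OE \<sigma> sm \<epsilon> B \<pi>E \<pi>E'
  "Lprime sm \<pi>E Ls N" "Lprime_parts sm \<pi>E Ls N" "N - 1"
  by unfold_locales
    (rule Lprime_part_subset Lprime_decomposition Lprime_full_rank Lprime_orthogonal
      Lprime_Fspan_part_smult Lprime_scaled Lprime_dual; assumption)+

theorem lemma3p8:
  fixes vF :: "'f::field \<Rightarrow> int" and \<pi>F :: 'f
    and \<iota> :: "'f \<Rightarrow> 'e::ring_1" and \<sigma> :: "'e \<Rightarrow> 'e" and \<epsilon> :: int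
    and OE :: "'e set" and \<pi>E :: 'e
    and sm :: "'e \<Rightarrow> 'v::ab_group_add \<Rightarrow> 'v" and B :: "'v \<Rightarrow> 'v \<Rightarrow> 'e"
    and L :: "'v set" and Ls :: "nat \<Rightarrow> 'v set" and N :: nat
    and M :: "'v set" and Ms :: "nat \<Rightarrow> 'v set" and n :: nat
    and g :: "'v \<Rightarrow> 'v" and x :: 'v and i j :: nat
  assumes F: "nonarch_local_field vF \<pi>F"
    and alg: "F_algebra \<iota>"
    and eps: "\<epsilon> = 1 \<or> \<epsilon> = -1"
    and Esig: "herm_pair \<iota> \<sigma>"
    and OE: "maximal_order \<iota> vF OE"
    and unif: "if ramified \<iota> \<sigma> OE \<pi>F \<or> case_quaternion \<iota> \<sigma>
               then E_uniformiser OE \<pi>E else \<pi>E = \<iota> \<pi>F"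
    and p2: "ramified \<iota> \<sigma> OE \<pi>F \<or> (case_F \<iota> \<sigma> \<and> \<epsilon> = 1) \<longrightarrow> res_char_not_2 vF"
    and V: "left_module sm"
    and form: "herm_form sm \<sigma> \<epsilon> B"
    and nd: "nondegenerate B"
    and L: "herm_lattice sm \<iota> \<pi>F OE B L"
    and J: "jordan_splitting sm \<iota> \<pi>F OE \<pi>E B L Ls N"
    and N2: "2 \<le> N"
    and Mchoice: "(M = L \<and> Ms = Ls \<and> n = N) \<or>
                  (M = Lprime sm \<pi>E Ls N \<and> Ms = Lprime_parts sm \<pi>E Ls N \<and> n = N - 1)"
    and ij: "i \<le> j" and jn: "j \<le> n"
    and g: "g \<in> stabiliser sm B M"
    and x: "x \<in> Ms j"
  shows "component sm \<iota> \<pi>F Ms n (g x) i \<in> pE_pow sm \<pi>E (int j - int i) (Ms i)"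
proof -
  have order: "OF_order \<iota> vF OE" using OE unfolding maximal_order_def by blast
  obtain \<pi>E' where \<pi>E': "\<pi>E * \<pi>E' = 1" "\<pi>E' * \<pi>E = 1"
    using herm_pair_uniformiser(2)[OF F alg Esig order unif] by blast
  interpret jordan_lattice_N2 vF \<pi>F \<iota> OE \<sigma> sm \<epsilon> B \<pi>E \<pi>E' L Ls N
  proof unfold_locales
    show "Fspan sm \<iota> \<pi>F L = UNIV" using L unfolding herm_lattice_def by blast
  qed (use F alg order herm_pair_involution[OF alg Esig] V form nd \<pi>E' J N2
      herm_pair_uniformiser(1,3)[OF F alg Esig order unif] in auto)
  show ?thesis
    using Mchoice L.component_isometry[OF _ ij] Lprime.component_isometry[OF _ ij] g jn x by auto
qed

end
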